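(* Fix $g\ge2$ and $n\ge2$. Consider systems of numbers $\langle\tau_{d_1}\cdots\tau_{d_k}\rangle^\bullet_g$ indexed by all $k\ge1$ and $(d_1,\dots,d_k)\in\mathbb{Z}^k$ with $d_1+\cdots+d_k=g-2+k$, symmetric under permutations of the $d_i$, and satisfying the string equation $$\langle\tau_{d_1}\cdots\tau_{d_k}\tau_0\rangle^\bullet_g=\sum_{j=1}^k\langle\tau_{d_1}\cdots\tau_{d_j-1}\cdots\tau_{d_k}\rangle^\bullet_g$$ for all $(d_1,\dots,d_k)\in\mathbb{Z}^k$ with $\sum d_i=g-1+k$. Such a system is uniquely determined by its values on tuples with all $d_i\neq0$ ("initial values"), which may be prescribed arbitrarily (symmetrically), and every value is then a linear combination with nonnegative integer coefficients of initial values. Treat the initial values (one variable for each such tuple up to permutation) as independent indeterminates, so that $$\mathcal{E}_{g,n}(\vec a):=\sum_{k=1}^n\frac{(-1)^k}{k!}\sum_{(I_1,\dots,I_k)}\ \sum_{\substack{d_1,\dots,d_k\in\mathbb{Z}\\ d_1+\cdots+d_k=g-2+k}}\langle\tau_{d_1}\cdots\tau_{d_k}\rangle^\bullet_g\prod_{j=1}^kQ_{d_j+|I_j|-1}\big(a_{[I_j]}\big)$$ is a polynomial in formal variables $a_1,\dots,a_n$ whose coefficients are linear in the initial values. Then for every initial value $\langle\tau_{d_1}\cdots\tau_{d_k}\rangle^\bullet_g$ (all $d_i\ne0$) in which at least one $d_i$ is negative, the coefficient $\partial\mathcal{E}_{g,n}(\vec a)/\partial\langle\tau_{d_1}\cdots\tau_{d_k}\rangle^\bullet_g$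 is identically zero as a polynomial in $a_1,\dots,a_n$.
   Context: $(I_1,\dots,I_k)$ runs over ordered $k$-tuples of nonempty pairwise disjoint subsets of $\{1,\dots,n\}$ with union $\{1,\dots,n\}$; $a_{[I]}:=\sum_{\ell\in I}a_\ell$. $Q_m(a):=\frac{(-1)^m}{2^m m!}\prod_{k=1}^{2m}(a+1-\frac k2)$ for $m\ge0$ and $Q_m:=0$ for $m<0$ (so the sum defining $\mathcal{E}_{g,n}$ is finite). *)

theory Defs
  imports Complex_Main "HOL-Library.Multiset"
begin

definition Qpol :: "int \<Rightarrow> real \<Rightarrow> real" where
  "Qpol m a = (if m < 0 then 0 else
     ((-1) ^ nat m / (2 ^ nat m * fact (nat m))) *
     (\<Prod>k\<in>{1..2 * nat m}. (a + 1 - real k / 2)))"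

definition corr_dom :: "nat \<Rightarrow> int list \<Rightarrow> bool" where
  "corr_dom g ds \<longleftrightarrow> length ds \<ge> 1 \<and> sum_list ds = int g - 2 + int (length ds)"

definition string_system :: "nat \<Rightarrow> (int list \<Rightarrow> real) \<Rightarrow> bool" where
  "string_system g tau \<longleftrightarrow>
     (\<forall>ds es. corr_dom g ds \<longrightarrow> mset ds = mset es \<longrightarrow> tau ds = tau es) \<and>
     (\<forall>ds. length ds \<ge> 1 \<longrightarrow> sum_list ds = int g - 1 + int (length ds) \<longrightarrow>
        tau (ds @ [0]) = (\<Sum>j<length ds. tau (ds[j := ds ! j - 1])))"

definition initial_tuple :: "nat \<Rightarrow> int list \<Rightarrow> bool" where
  "initial_tuple g ds \<longleftrightarrow> corr_dom g ds \<and> (\<forall>d\<in>set ds. d \<noteq> 0)"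

definition ordered_set_partitions :: "nat \<Rightarrow> nat \<Rightarrow> nat set list set" where
  "ordered_set_partitions n k = {Is. length Is = k \<and> (\<forall>j<k. Is ! j \<noteq> {}) \<and>
      (\<forall>i<k. \<forall>j<k. i \<noteq> j \<longrightarrow> Is ! i \<inter> Is ! j = {}) \<and> \<Union>(set Is) = {1..n}}"

text \<open>The (finite) set of d-tuples over which the inner sum effectively runs: sum g-2+k, and
  all Q-indices d_j + |I_j| - 1 nonnegative (the other terms vanish since Q_m = 0 for m < 0).\<close>
definition d_range :: "nat \<Rightarrow> nat set list \<Rightarrow> int list set" where
  "d_range g Is = {ds. length ds = length Is \<and> sum_list ds = int g - 2 + int (length Is) \<and>
      (\<forall>j<length Is. ds ! j + int (card (Is ! j)) - 1 \<ge> 0)}"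

definition E_gn :: "nat \<Rightarrow> nat \<Rightarrow> (int list \<Rightarrow> real) \<Rightarrow> (nat \<Rightarrow> real) \<Rightarrow> real" where
  "E_gn g n tau a = (\<Sum>k=1..n. ((-1) ^ k / fact k) *
     (\<Sum>Is\<in>ordered_set_partitions n k. \<Sum>ds\<in>d_range g Is.
        tau ds * (\<Prod>j<k. Qpol (ds ! j + int (card (Is ! j)) - 1) (\<Sum>l\<in>Is ! j. a l))))"

end

theory Submission
  imports Defs
    "HOL-Computational_Algebra.Formal_Power_Series"
    "HOL-Computational_Algebra.Polynomial"
    "HOL-Library.Disjoint_Sets"
begin

text \<open>
  Put \<open>q(x) = \<Sum>\<^sub>m Q_m(x) t^m\<close> and \<open>V(I) = q(a_I)\<close> for \<open>I \<subseteq> {1..n}\<close>. Then \<open>E_g,n\<close> is a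
  sum over ordered set partitions of products of the coefficients of \<open>t^(d + |I| - 1)\<close> in
  \<open>V(I)\<close>, and this makes sense for every set function \<open>V\<close> with values in power series;
  these form a ring under subset convolution. The string equation makes \<open>E\<close> invariant under
  multiplying \<open>V\<close> by a string factor \<open>1 + s t^(|K| - 1) \<delta>_K\<close>.

  By Moebius inversion \<open>V(I) = \<Prod>\<^sub>K\<^sub>\<subseteq>\<^sub>I f_K\<close>, and \<open>f_K \<equiv> 1\<close> modulo \<open>t^(|K| - 1)\<close>: the logarithmic
  derivative of \<open>f_K\<close> is a mixed difference of order \<open>|K|\<close> of that of \<open>q(x)\<close>, whose
  coefficient of \<open>t^m\<close> is a polynomial of degree \<open>m + 2\<close> in \<open>x\<close>. Such a product can be divided
  by string factors until the remainder \<open>R\<close> satisfies \<open>R(J) \<equiv> 0\<close> modulo \<open>t^|J|\<close> for all \<open>J\<close>.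
  In \<open>E(R)\<close> every term vanishes: a block with \<open>d \<le> 0\<close> asks for a coefficient of too low an
  order, and a tuple with all \<open>d > 0\<close> is an initial value other than the given one, which has
  a negative entry.
\<close>

unbundle fps_syntax

section \<open>The ring of set functions under subset convolution\<close>

typedef (overloaded) ('i, 'a) setfun = "{f :: 'i set \<Rightarrow> 'a::zero. \<forall>J. infinite J \<longrightarrow> f J = 0}"
  by (intro exI[of _ "\<lambda>_. 0"]) auto

setup_lifting type_definition_setfun

lift_definition setfun_nth :: "('i, 'a::zero) setfun \<Rightarrow> 'i set \<Rightarrow> 'a" (infixl "$$" 75)
  is "\<lambda>f. f" .

lemma setfun_nth_infinite: "infinite J \<Longrightarrow> V $$ J = 0"
  by transfer blast

lemma setfun_eqI:
  assumes "\<And>J. finite J \<Longrightarrow> V $$ J = W $$ J"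
  shows "V = W"
proof -
  have "V $$ J = W $$ J" for J
    using assms[of J] setfun_nth_infinite[of J V] setfun_nth_infinite[of J W] by (cases "finite J") auto
  then show ?thesis
    by (metis Rep_setfun_inject ext setfun_nth.rep_eq)
qed

definition subset_conv :: "('i set \<Rightarrow> 'a::comm_ring_1) \<Rightarrow> ('i set \<Rightarrow> 'a) \<Rightarrow> 'i set \<Rightarrow> 'a" where
  "subset_conv f g J = (if finite J then (\<Sum>A\<in>Pow J. f A * g (J - A)) else 0)"

lemma subset_conv_commute: "subset_conv f g = subset_conv g f"
proof (rule ext)
  fix J
  have "(\<Sum>A\<in>Pow J. f A * g (J - A)) = (\<Sum>A\<in>Pow J. g A * f (J - A))"
    by (rule sum.reindex_bij_witness[of _ "\<lambda>A. J - A" "\<lambda>A. J - A"])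
       (auto simp: double_diff mult.commute)
  then show "subset_conv f g J = subset_conv g f J"
    by (simp add: subset_conv_def)
qed

lemma sum_Pow_Pow_split:
  assumes "finite J"
  shows "(\<Sum>A\<in>Pow J. \<Sum>B\<in>Pow A. F B (A - B) (J - A)) =
         (\<Sum>B\<in>Pow J. \<Sum>C\<in>Pow (J - B). F B C (J - B - C))"
proof -
  have fin: "finite (Pow J)" "\<And>A. A \<in> Pow J \<Longrightarrow> finite (Pow A)"
    using assms by (auto intro: finite_subset)
  have "(\<Sum>A\<in>Pow J. \<Sum>B\<in>Pow A. F B (A - B) (J - A)) =
        (\<Sum>(A, B)\<in>(SIGMA A:Pow J. Pow A). F B (A - B) (J - A))"
    by (rule sum.Sigma) (use fin in auto)
  also have "\<dots> = (\<Sum>(B, C)\<in>(SIGMA B:Pow J. Pow (J - B)). F B C (J - B - C))"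
    by (rule sum.reindex_bij_witness[of _ "\<lambda>(B, C). (B \<union> C, B)" "\<lambda>(A, B). (B, A - B)"])
       (auto simp: Diff_Un Un_Diff double_diff intro!: arg_cong[where f = "F _ _"])
  also have "\<dots> = (\<Sum>B\<in>Pow J. \<Sum>C\<in>Pow (J - B). F B C (J - B - C))"
    by (rule sum.Sigma[symmetric]) (use assms in auto)
  finally show ?thesis .
qed

lemma subset_conv_assoc: "subset_conv (subset_conv f g) h = subset_conv f (subset_conv g h)"
proof (rule ext)
  fix J
  show "subset_conv (subset_conv f g) h J = subset_conv f (subset_conv g h) J"
  proof (cases "finite J")
    case True
    have "subset_conv (subset_conv f g) h J = (\<Sum>A\<in>Pow J. \<Sum>B\<in>Pow A. f B * g (A - B) * h (J - A))"
      using True by (auto simp: subset_conv_def sum_distrib_right intro!: sum.cong finite_subset)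
    also have "\<dots> = (\<Sum>B\<in>Pow J. \<Sum>C\<in>Pow (J - B). f B * g C * h (J - B - C))"
      by (rule sum_Pow_Pow_split[OF True])
    also have "\<dots> = subset_conv f (subset_conv g h) J"
      using True by (simp add: subset_conv_def sum_distrib_left mult.assoc)
    finally show ?thesis .
  qed (simp add: subset_conv_def)
qed

instantiation setfun :: (type, comm_ring_1) comm_ring_1
begin

lift_definition zero_setfun :: "('a, 'b) setfun" is "\<lambda>_ :: 'a set. 0 :: 'b" by simp
lift_definition one_setfun :: "('a, 'b) setfun" is "\<lambda>J. if J = {} then 1 else 0" by auto
lift_definition plus_setfun :: "('a, 'b) setfun \<Rightarrow> ('a, 'b) setfun \<Rightarrow> ('a, 'b) setfun"
  is "\<lambda>f g J. f J + g J" by simp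
lift_definition minus_setfun :: "('a, 'b) setfun \<Rightarrow> ('a, 'b) setfun \<Rightarrow> ('a, 'b) setfun"
  is "\<lambda>f g J. f J - g J" by simp
lift_definition uminus_setfun :: "('a, 'b) setfun \<Rightarrow> ('a, 'b) setfun" is "\<lambda>f J. - f J" by simp
lift_definition times_setfun :: "('a, 'b) setfun \<Rightarrow> ('a, 'b) setfun \<Rightarrow> ('a, 'b) setfun"
  is subset_conv by (simp add: subset_conv_def)

instance
proof
  fix a b c :: "('a, 'b) setfun"
  show "a * b * c = a * (b * c)" by transfer (rule subset_conv_assoc)
  show "a * b = b * a" by transfer (rule subset_conv_commute)
  show "1 * a = a"
  proof transfer
    fix f :: "'a set \<Rightarrow> 'b" assume f: "\<forall>J. infinite J \<longrightarrow> f J = 0"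
    have "(\<Sum>A\<in>Pow J. (if A = {} then 1 else 0) * f (J - A)) = f J" if "finite J" for J
      by (subst sum.mono_neutral_cong_right[of "Pow J" "{{}}"]) (use that in auto)
    then show "subset_conv (\<lambda>J. if J = {} then 1 else 0) f = f"
      using f by (auto simp: subset_conv_def)
  qed
  show "(a + b) * c = a * c + b * c"
    by transfer (simp add: subset_conv_def sum.distrib distrib_right fun_eq_iff)
  show "a + b + c = a + (b + c)" by transfer (simp add: add.assoc)
  show "a + b = b + a" by transfer (simp add: add.commute)
  show "0 + a = a" by transfer simp
  show "- a + a = 0" by transfer simp
  show "a - b = a + - b" by transfer simp
  show "(0 :: ('a, 'b) setfun) \<noteq> 1" by transfer (simp add: fun_eq_iff exI[of _ "{}"])
qed

end

lemma setfun_nth_zero [simp]: "0 $$ J = 0" by transfer simp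
lemma setfun_nth_one: "1 $$ J = (if J = {} then 1 else 0)" by transfer simp
lemma setfun_nth_add [simp]: "(V + W) $$ J = V $$ J + W $$ J" by transfer simp
lemma setfun_nth_diff [simp]: "(V - W) $$ J = V $$ J - W $$ J" by transfer simp
lemma setfun_nth_uminus [simp]: "(- V) $$ J = - (V $$ J)" by transfer simp

lemma setfun_nth_mult:
  "(V * W) $$ J = (if finite J then (\<Sum>A\<in>Pow J. V $$ A * W $$ (J - A)) else 0)"
  by transfer (simp add: subset_conv_def)

lemma setfun_nth_sum: "sum F S $$ J = (\<Sum>x\<in>S. F x $$ J)"
  by (induction S rule: infinite_finite_induct) auto

lift_definition setfun_monom :: "'i set \<Rightarrow> 'a::zero \<Rightarrow> ('i, 'a) setfun"
  is "\<lambda>K c J. if J = K \<and> finite K then c else 0" by auto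

lemma setfun_nth_monom: "setfun_monom K c $$ J = (if J = K \<and> finite K then c else 0)"
  by transfer simp

lemma setfun_monom_uminus: "setfun_monom K (- c) = - setfun_monom K (c :: 'a::comm_ring_1)"
  by (rule setfun_eqI) (simp add: setfun_nth_monom)

lemma setfun_nth_monom_mult:
  fixes c :: "'a::comm_ring_1"
  assumes "finite K" "finite J"
  shows "(setfun_monom K c * V) $$ J = (if K \<subseteq> J then c * V $$ (J - K) else 0)"
proof -
  have "(setfun_monom K c * V) $$ J = (\<Sum>A\<in>Pow J. setfun_monom K c $$ A * V $$ (J - A))"
    using assms by (simp add: setfun_nth_mult)
  also have "\<dots> = (\<Sum>A\<in>Pow J. if A = K then c * V $$ (J - A) else 0)"
    by (rule sum.cong) (auto simp: setfun_nth_monom assms)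
  finally show ?thesis
    using assms by simp
qed

lemma setfun_mult_eq_0_if_supported_above:
  fixes V W :: "('i, 'a::comm_ring_1) setfun"
  assumes "M \<noteq> {}" "\<And>J. V $$ J \<noteq> 0 \<Longrightarrow> M \<subseteq> J" "\<And>J. W $$ J \<noteq> 0 \<Longrightarrow> M \<subseteq> J"
  shows "V * W = 0"
proof (rule setfun_eqI)
  fix J :: "'i set" assume J: "finite J"
  have "V $$ A * W $$ (J - A) = 0" for A
  proof (cases "V $$ A = 0")
    case False
    then have "M \<subseteq> A"
      using assms(2) by blast
    then have "W $$ (J - A) = 0"
      using assms(1,3) by blast
    then show ?thesis
      by simp
  qed simp
  then show "(V * W) $$ J = 0 $$ J"
    using J by (simp add: setfun_nth_mult)
qed

lemma setfun_monom_square_eq_0: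
  "K \<noteq> {} \<Longrightarrow> setfun_monom K (c :: 'a::comm_ring_1) * setfun_monom K c = 0"
  by (rule setfun_mult_eq_0_if_supported_above[of K]) (auto simp: setfun_nth_monom split: if_splits)

lemma setfun_nth_power_eq_0:
  fixes N :: "('i, 'a::comm_ring_1) setfun"
  assumes N: "N $$ {} = 0" and "finite J" "card J < k"
  shows "(N ^ k) $$ J = 0"
  using assms(2,3)
proof (induction k arbitrary: J)
  case (Suc k)
  have "N $$ A * (N ^ k) $$ (J - A) = 0" if "A \<subseteq> J" for A
  proof (cases "A = {}")
    case False
    have "finite A" "card A \<le> card J"
      using that Suc.prems(1) by (auto intro: finite_subset card_mono)
    moreover have "card A > 0"
      using False \<open>finite A\<close> by (simp add: card_gt_0_iff)
    ultimately have "card (J - A) < card J"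
      using that by (simp add: card_Diff_subset)
    then show ?thesis
      using Suc by simp
  qed (simp add: N)
  then show ?case
    using Suc.prems by (simp add: setfun_nth_mult)
qed simp

definition setfun_geometric :: "('i, 'a::comm_ring_1) setfun \<Rightarrow> nat \<Rightarrow> ('i, 'a) setfun" where
  "setfun_geometric N m = (\<Sum>k\<le>m. N ^ k)"

lemma setfun_nth_geometric_stable:
  assumes "N $$ {} = 0" "finite J" "card J \<le> m"
  shows "setfun_geometric N m $$ J = setfun_geometric N (card J) $$ J"
proof -
  have "(\<Sum>k\<le>m. (N ^ k) $$ J) = (\<Sum>k\<le>card J. (N ^ k) $$ J)"
    by (rule sum.mono_neutral_right) (auto simp: assms setfun_nth_power_eq_0)
  then show ?thesis
    by (simp add: setfun_geometric_def setfun_nth_sum)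
qed

lemma one_minus_mult_setfun_geometric: "(1 - N) * setfun_geometric N m = 1 - N ^ Suc m"
proof (induction m)
  case (Suc m)
  have "setfun_geometric N (Suc m) = setfun_geometric N m + N ^ Suc m"
    by (simp add: setfun_geometric_def)
  then have "(1 - N) * setfun_geometric N (Suc m) = (1 - N) * setfun_geometric N m + (1 - N) * N ^ Suc m"
    by (simp add: distrib_left)
  also have "\<dots> = 1 - N ^ Suc (Suc m)"
    using Suc.IH by (simp add: algebra_simps)
  finally show ?case .
qed (simp add: setfun_geometric_def)

text \<open>An element with constant term 1 is a unit: on sets of size at most \<open>m\<close>, its inverse is
  the truncated geometric series in \<open>1 - V\<close>, because \<open>(1 - V) ^ k\<close> vanishes on sets of size
  less than \<open>k\<close>.\<close>

lift_definition setfun_inverse :: "('i, 'a::comm_ring_1) setfun \<Rightarrow> ('i, 'a) setfun"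
  is "\<lambda>f J. if finite J then setfun_geometric (1 - Abs_setfun f) (card J) $$ J else 0" by simp

lemma setfun_nth_inverse:
  "finite J \<Longrightarrow> setfun_inverse V $$ J = setfun_geometric (1 - V) (card J) $$ J"
  by (simp add: setfun_inverse.rep_eq setfun_nth.rep_eq Rep_setfun_inverse)

lemma setfun_mult_inverse:
  fixes V :: "('i, 'a::comm_ring_1) setfun"
  assumes "V $$ {} = 1"
  shows "V * setfun_inverse V = 1"
proof (rule setfun_eqI)
  fix J :: "'i set" assume J: "finite J"
  let ?G = "setfun_geometric (1 - V) (card J)"
  have N0: "(1 - V) $$ {} = 0"
    using assms by (simp add: setfun_nth_one)
  have "setfun_inverse V $$ (J - A) = ?G $$ (J - A)" if "A \<subseteq> J" for A
    using setfun_nth_geometric_stable[OF N0, of "J - A" "card J"] J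
    by (simp add: setfun_nth_inverse card_mono)
  then have "(V * setfun_inverse V) $$ J = (V * ?G) $$ J"
    using J by (simp add: setfun_nth_mult)
  also have "V * ?G = 1 - (1 - V) ^ Suc (card J)"
    using one_minus_mult_setfun_geometric[of "1 - V" "card J"] by simp
  finally show "(V * setfun_inverse V) $$ J = 1 $$ J"
    using setfun_nth_power_eq_0[OF N0 J, of "Suc (card J)"] by simp
qed

section \<open>Power series vanishing to a given order\<close>

definition fps_ord_ge :: "nat \<Rightarrow> 'a::zero fps \<Rightarrow> bool" where
  "fps_ord_ge r p \<longleftrightarrow> (\<forall>i<r. p $ i = 0)"

lemma fps_ord_ge_0 [simp]: "fps_ord_ge 0 p"
  by (simp add: fps_ord_ge_def)

lemma fps_ord_ge_zero [simp]: "fps_ord_ge r 0"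
  by (simp add: fps_ord_ge_def)

lemma fps_ord_ge_mono: "fps_ord_ge r p \<Longrightarrow> s \<le> r \<Longrightarrow> fps_ord_ge s p"
  by (simp add: fps_ord_ge_def)

lemma fps_ord_ge_add:
  fixes p q :: "'a::monoid_add fps"
  shows "fps_ord_ge r p \<Longrightarrow> fps_ord_ge r q \<Longrightarrow> fps_ord_ge r (p + q)"
  by (simp add: fps_ord_ge_def)

lemma fps_ord_ge_sum:
  fixes f :: "_ \<Rightarrow> 'a::comm_monoid_add fps"
  shows "(\<And>x. x \<in> S \<Longrightarrow> fps_ord_ge r (f x)) \<Longrightarrow> fps_ord_ge r (sum f S)"
  by (induction S rule: infinite_finite_induct) (auto intro: fps_ord_ge_add)

lemma fps_ord_ge_mult:
  fixes p q :: "'a::comm_semiring_0 fps"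
  assumes "fps_ord_ge r p" "fps_ord_ge s q" "t \<le> r + s"
  shows "fps_ord_ge t (p * q)"
  unfolding fps_ord_ge_def
proof (intro allI impI)
  fix i assume "i < t"
  then have "p $ j * q $ (i - j) = 0" if "j \<le> i" for j
    using assms that by (cases "j < r") (auto simp: fps_ord_ge_def)
  then show "(p * q) $ i = 0"
    by (simp add: fps_mult_nth)
qed

lemma fps_prod_nth_0: "prod f S $ 0 = (\<Prod>x\<in>S. f x $ 0 :: 'a::comm_ring_1)"
  by (induction S rule: infinite_finite_induct) auto

lemma fps_ord_ge_prod_minus_1:
  fixes f :: "_ \<Rightarrow> 'a::comm_ring_1 fps"
  assumes "\<And>x. x \<in> S \<Longrightarrow> fps_ord_ge r (f x - 1)"
  shows "fps_ord_ge r (prod f S - 1)"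
  using assms
proof (induction S rule: infinite_finite_induct)
  case (insert x F)
  have "fps_ord_ge r ((f x - 1) * prod f F + (prod f F - 1))"
    by (intro fps_ord_ge_add fps_ord_ge_mult[of r _ 0]) (use insert in auto)
  moreover have "prod f (insert x F) - 1 = (f x - 1) * prod f F + (prod f F - 1)"
    using insert by (simp add: algebra_simps)
  ultimately show ?case
    by (simp only:)
qed simp_all

section \<open>Products over subsets\<close>

definition admissible :: "('i set \<Rightarrow> 'a::comm_ring_1 fps) \<Rightarrow> bool" where
  "admissible h \<longleftrightarrow> h {} = 1 \<and> (\<forall>K. h K $ 0 = 1) \<and>
     (\<forall>K. finite K \<longrightarrow> fps_ord_ge (card K - 1) (h K - 1))"

definition ord_ge_card_on :: "'i set \<Rightarrow> ('i, 'a::comm_ring_1 fps) setfun \<Rightarrow> bool" where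
  "ord_ge_card_on A V \<longleftrightarrow> V $$ {} = 1 \<and> (\<forall>J. J \<subseteq> A \<longrightarrow> fps_ord_ge (card J) (V $$ J))"

lemma ord_ge_card_on_one: "ord_ge_card_on A 1"
  by (simp add: ord_ge_card_on_def setfun_nth_one)

lemma ord_ge_card_on_mult:
  assumes A: "finite A" and V: "ord_ge_card_on A V" and W: "ord_ge_card_on A W"
  shows "ord_ge_card_on A (V * W)"
  unfolding ord_ge_card_on_def
proof (intro conjI allI impI)
  show "(V * W) $$ {} = 1"
    using V W by (simp add: setfun_nth_mult ord_ge_card_on_def)
next
  fix J assume J: "J \<subseteq> A"
  then have fJ: "finite J"
    using A by (rule finite_subset)
  have "fps_ord_ge (card J) (V $$ B * W $$ (J - B))" if "B \<subseteq> J" for B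
  proof (rule fps_ord_ge_mult)
    have "B \<subseteq> A" "J - B \<subseteq> A"
      using J that by auto
    then show "fps_ord_ge (card B) (V $$ B)" "fps_ord_ge (card (J - B)) (W $$ (J - B))"
      using V W by (simp_all add: ord_ge_card_on_def)
    show "card J \<le> card B + card (J - B)"
      using that fJ by (simp add: card_Diff_subset card_mono finite_subset)
  qed
  then have "fps_ord_ge (card J) (\<Sum>B\<in>Pow J. V $$ B * W $$ (J - B))"
    by (intro fps_ord_ge_sum) simp
  then show "fps_ord_ge (card J) ((V * W) $$ J)"
    using fJ by (simp add: setfun_nth_mult)
qed

lift_definition subset_prod :: "('i set \<Rightarrow> 'a::comm_ring_1 fps) \<Rightarrow> ('i, 'a fps) setfun"
  is "\<lambda>h J. if finite J then (\<Prod>K\<in>Pow J. h K) else 0" by auto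

lemma setfun_nth_subset_prod: "finite J \<Longrightarrow> subset_prod h $$ J = (\<Prod>K\<in>Pow J. h K)"
  by transfer simp

lemma setfun_nth_subset_prod_empty: "admissible h \<Longrightarrow> subset_prod h $$ {} = 1"
  by (simp add: setfun_nth_subset_prod admissible_def)

lift_definition setfun_shift :: "'i set \<Rightarrow> ('i, 'a::zero) setfun \<Rightarrow> ('i, 'a) setfun"
  is "\<lambda>M V I. if finite I \<and> I \<inter> M = {} then V (I \<union> M) else 0" by auto

lemma setfun_nth_shift:
  "setfun_shift M V $$ I = (if finite I \<and> I \<inter> M = {} then V $$ (I \<union> M) else 0)"
  by transfer simp

definition relative_prod :: "('i set \<Rightarrow> 'a::comm_ring_1 fps) \<Rightarrow> 'i set \<Rightarrow> ('i, 'a fps) setfun" where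
  "relative_prod h M = setfun_shift M (subset_prod h) * setfun_inverse (subset_prod h)"

lemma subset_prod_fun_upd:
  assumes "admissible h" "finite M" "M \<noteq> {}"
  shows "subset_prod (h(M := h M * g)) =
    subset_prod h * (1 + setfun_monom M (g - 1) * relative_prod h M)"
proof -
  have "subset_prod (h(M := h M * g)) = subset_prod h + setfun_monom M (g - 1) * setfun_shift M (subset_prod h)"
  proof (rule setfun_eqI)
    fix J :: "'a set" assume J: "finite J"
    show "subset_prod (h(M := h M * g)) $$ J =
      (subset_prod h + setfun_monom M (g - 1) * setfun_shift M (subset_prod h)) $$ J"
    proof (cases "M \<subseteq> J")
      case True
      have "(\<Prod>K\<in>Pow J. (h(M := h M * g)) K) = (\<Prod>K\<in>Pow J. h K) * g"
        using True J by (simp add: prod.remove[of "Pow J" M] algebra_simps)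
      moreover have "J - M \<union> M = J" "(J - M) \<inter> M = {}"
        using True by blast+
      then have "(setfun_monom M (g - 1) * setfun_shift M (subset_prod h)) $$ J =
          (g - 1) * (\<Prod>K\<in>Pow J. h K)"
        using J True assms(2) by (simp add: setfun_nth_monom_mult setfun_nth_shift setfun_nth_subset_prod)
      ultimately show ?thesis
        using J by (simp add: setfun_nth_subset_prod algebra_simps)
    next
      case False
      then have "(\<Prod>K\<in>Pow J. (h(M := h M * g)) K) = (\<Prod>K\<in>Pow J. h K)"
        by (intro prod.cong) auto
      then show ?thesis
        using J False assms(2) by (simp add: setfun_nth_subset_prod setfun_nth_monom_mult)
    qed
  qed
  also have "\<dots> = subset_prod h * (1 + setfun_monom M (g - 1) * relative_prod h M)"
  proof -
    have "subset_prod h * (1 + setfun_monom M (g - 1) * relative_prod h M) =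
        subset_prod h + setfun_monom M (g - 1) * setfun_shift M (subset_prod h) *
          (subset_prod h * setfun_inverse (subset_prod h))"
      by (simp add: relative_prod_def algebra_simps)
    then show ?thesis
      using setfun_mult_inverse[OF setfun_nth_subset_prod_empty[OF assms(1)]] by simp
  qed
  finally show ?thesis .
qed

definition mult_on :: "('i set \<Rightarrow> 'a::comm_ring_1 fps) \<Rightarrow> ('i set \<Rightarrow> 'a fps) \<Rightarrow> 'i set set \<Rightarrow> 'i set \<Rightarrow> 'a fps" where
  "mult_on h g S B = (if B \<in> S then h B * g B else h B)"

lemma admissible_mult_on:
  assumes h: "admissible h" and S: "{} \<notin> S"
    and g: "\<And>B. B \<in> S \<Longrightarrow> g B $ 0 = 1 \<and> fps_ord_ge (card B - 1) (g B - 1)"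
  shows "admissible (mult_on h g S)"
  unfolding admissible_def
proof (intro conjI allI impI)
  show "mult_on h g S {} = 1" "mult_on h g S K $ 0 = 1" for K
    using h S g by (auto simp: mult_on_def admissible_def)
  fix K :: "'a set" assume K: "finite K"
  show "fps_ord_ge (card K - 1) (mult_on h g S K - 1)"
  proof (cases "K \<in> S")
    case True
    have "fps_ord_ge (card K - 1) ((h K - 1) * g K + (g K - 1))"
      by (intro fps_ord_ge_add fps_ord_ge_mult[of "card K - 1" _ 0])
         (use h K g True in \<open>auto simp: admissible_def\<close>)
    moreover have "mult_on h g S K - 1 = (h K - 1) * g K + (g K - 1)"
      using True by (simp add: mult_on_def algebra_simps)
    ultimately show ?thesis
      by (simp only:)
  qed (use h K in \<open>simp add: mult_on_def admissible_def\<close>)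
qed

lemma ord_ge_card_on_one_plus_monom_mult:
  assumes A: "finite A" and M: "M \<subseteq> A" "M \<noteq> {}" and c: "fps_ord_ge (card M) c"
    and X: "\<And>J. J \<subseteq> A - M \<Longrightarrow> fps_ord_ge (card J) (X $$ J)"
  shows "ord_ge_card_on A (1 + setfun_monom M c * X)"
  unfolding ord_ge_card_on_def
proof (intro conjI allI impI)
  have fM: "finite M"
    using M(1) A by (rule finite_subset)
  then show "(1 + setfun_monom M c * X) $$ {} = 1"
    using M(2) by (simp add: setfun_nth_monom_mult setfun_nth_one)
  fix J assume J: "J \<subseteq> A"
  then have fJ: "finite J"
    using A by (rule finite_subset)
  have "fps_ord_ge (card J) (c * X $$ (J - M))" if "M \<subseteq> J"
    by (rule fps_ord_ge_mult[OF c X]) (use J that fJ in \<open>auto simp: card_Diff_subset card_mono fM\<close>)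
  then show "fps_ord_ge (card J) ((1 + setfun_monom M c * X) $$ J)"
    using fJ fM M(2) by (auto simp: setfun_nth_monom_mult setfun_nth_one)
qed

text \<open>The inductive step of \<open>relative_prod_ord_ge\<close> below; \<open>smaller\<close> is its claim for proper
  subsets of \<open>A\<close>.\<close>

lemma ord_ge_card_on_mult_on:
  fixes h :: "'i set \<Rightarrow> 'a::comm_ring_1 fps"
  assumes A: "finite A" and h: "admissible h" and S: "S \<subseteq> Pow A - {{}}"
    and g: "\<And>B. B \<in> S \<Longrightarrow> g B $ 0 = 1 \<and> fps_ord_ge (card B) (g B - 1)"
    and smaller: "\<And>A' (h' :: 'i set \<Rightarrow> 'a fps) M. A' \<subset> A \<Longrightarrow> admissible h' \<Longrightarrow> finite M \<Longrightarrow> M \<noteq> {} \<Longrightarrow> A' \<inter> M = {} \<Longrightarrow>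
      fps_ord_ge (card A') (relative_prod h' M $$ A')"
  shows "ord_ge_card_on A (subset_prod (mult_on h g S) * setfun_inverse (subset_prod h))"
proof -
  have "finite S"
    using A S by (meson finite_Diff finite_Pow_iff finite_subset)
  then show ?thesis
    using S g
  proof (induction S rule: finite_induct)
    case empty
    have "mult_on h g {} = h"
      by (simp add: mult_on_def fun_eq_iff)
    then show ?case
      using setfun_mult_inverse[OF setfun_nth_subset_prod_empty[OF h]] by (simp add: ord_ge_card_on_one)
  next
    case (insert M S)
    let ?h = "mult_on h g S"
    have h': "admissible ?h"
    proof (rule admissible_mult_on[OF h])
      show "{} \<notin> S"
        using insert.prems by blast
      show "g B $ 0 = 1 \<and> fps_ord_ge (card B - 1) (g B - 1)" if "B \<in> S" for B
        using insert.prems(2)[of B] that fps_ord_ge_mono[of "card B" "g B - 1" "card B - 1"] by auto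
    qed
    have M: "M \<subseteq> A" "M \<noteq> {}" "finite M"
      using insert.prems A by (auto intro: finite_subset)
    have "mult_on h g (insert M S) = ?h(M := ?h M * g M)"
      using insert.hyps by (auto simp: mult_on_def fun_eq_iff)
    then have "subset_prod (mult_on h g (insert M S)) * setfun_inverse (subset_prod h) =
        (subset_prod ?h * setfun_inverse (subset_prod h)) *
        (1 + setfun_monom M (g M - 1) * relative_prod ?h M)"
      using subset_prod_fun_upd[OF h' M(3,2)] by (simp add: mult_ac)
    moreover have "ord_ge_card_on A (1 + setfun_monom M (g M - 1) * relative_prod ?h M)"
    proof (rule ord_ge_card_on_one_plus_monom_mult[OF A M(1,2)])
      show "fps_ord_ge (card M) (g M - 1)"
        using insert.prems by simp
      show "fps_ord_ge (card J) (relative_prod ?h M $$ J)" if "J \<subseteq> A - M" for J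
        by (rule smaller[OF _ h' M(3,2)]) (use that M in auto)
    qed
    moreover have "ord_ge_card_on A (subset_prod ?h * setfun_inverse (subset_prod h))"
      using insert by simp
    ultimately show ?case
      using ord_ge_card_on_mult[OF A] by simp
  qed
qed

lemma prod_Pow_Un:
  assumes "I \<inter> M = {}"
  shows "(\<Prod>K\<in>Pow (I \<union> M). h K) = (\<Prod>B\<in>Pow I. \<Prod>C\<in>Pow M. h (B \<union> C))"
proof -
  have "(\<Prod>K\<in>Pow (I \<union> M). h K) = (\<Prod>(B, C)\<in>Pow I \<times> Pow M. h (B \<union> C))"
    by (rule prod.reindex_bij_witness[of _ "\<lambda>(B, C). B \<union> C" "\<lambda>K. (K \<inter> I, K \<inter> M)"])
       (use assms in \<open>auto simp: Int_Un_distrib[symmetric] Int_absorb2\<close>)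
  then show ?thesis
    by (simp add: prod.cartesian_product)
qed

text \<open>The heart of the order estimate: splitting every \<open>K \<subseteq> I \<union> M\<close> as \<open>B \<union> C\<close> with
  \<open>B \<subseteq> I\<close> and \<open>C \<subseteq> M\<close> turns the shifted product into a product of the same shape, with
  the factors for \<open>C \<noteq> {}\<close> absorbed into those for \<open>B\<close>.\<close>

lemma setfun_nth_shift_subset_prod:
  assumes h: "admissible h" and I: "finite I" "I \<subseteq> A" and M: "finite M" "I \<inter> M = {}"
  shows "setfun_shift M (subset_prod h) $$ I = subset_prod h $$ M *
    subset_prod (mult_on h (\<lambda>B. \<Prod>C\<in>Pow M - {{}}. h (B \<union> C)) (Pow A - {{}})) $$ I"
proof -
  let ?g = "\<lambda>B. \<Prod>C\<in>Pow M - {{}}. h (B \<union> C)"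
  have "setfun_shift M (subset_prod h) $$ I = (\<Prod>B\<in>Pow I. \<Prod>C\<in>Pow M. h (B \<union> C))"
    using I M by (simp add: setfun_nth_shift setfun_nth_subset_prod prod_Pow_Un)
  also have "\<dots> = (\<Prod>C\<in>Pow M. h C) * (\<Prod>B\<in>Pow I - {{}}. h B * ?g B)"
    using I M by (simp add: prod.remove[of "Pow I" "{}"] prod.remove[of "Pow M" "{}"])
  also have "(\<Prod>B\<in>Pow I - {{}}. h B * ?g B) = (\<Prod>B\<in>Pow I. mult_on h ?g (Pow A - {{}}) B)"
  proof -
    have "(\<Prod>B\<in>Pow I. mult_on h ?g (Pow A - {{}}) B) =
        mult_on h ?g (Pow A - {{}}) {} * (\<Prod>B\<in>Pow I - {{}}. mult_on h ?g (Pow A - {{}}) B)"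
      using I by (simp add: prod.remove[of "Pow I" "{}"])
    also have "\<dots> = (\<Prod>B\<in>Pow I - {{}}. h B * ?g B)"
    proof -
      have "mult_on h ?g (Pow A - {{}}) B = h B * ?g B" if "B \<in> Pow I - {{}}" for B
        using that I(2) by (auto simp: mult_on_def)
      then show ?thesis
        using h by (simp add: mult_on_def admissible_def)
    qed
    finally show ?thesis ..
  qed
  finally show ?thesis
    using I M by (simp add: setfun_nth_subset_prod)
qed

lemma absorbed_factor_ord_ge:
  assumes h: "admissible h" and B: "finite B" and M: "finite M" "B \<inter> M = {}"
  shows "fps_ord_ge (card B) ((\<Prod>C\<in>Pow M - {{}}. h (B \<union> C)) - 1)"
proof (rule fps_ord_ge_prod_minus_1)
  fix C assume C: "C \<in> Pow M - {{}}"
  then have "finite C" "C \<noteq> {}" "B \<inter> C = {}"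
    using M by (auto intro: finite_subset)
  then have "card C > 0"
    by (simp add: card_gt_0_iff)
  then have "card B \<le> card (B \<union> C) - 1"
    using B \<open>finite C\<close> \<open>B \<inter> C = {}\<close> by (simp add: card_Un_disjoint)
  moreover have "fps_ord_ge (card (B \<union> C) - 1) (h (B \<union> C) - 1)"
    using h B \<open>finite C\<close> by (simp add: admissible_def)
  ultimately show "fps_ord_ge (card B) (h (B \<union> C) - 1)"
    by (rule fps_ord_ge_mono[rotated])
qed

lemma relative_prod_ord_ge:
  assumes "finite A" "admissible h" "finite M" "M \<noteq> {}" "A \<inter> M = {}"
  shows "fps_ord_ge (card A) (relative_prod h M $$ A)"
  using assms
proof (induction A arbitrary: h M rule: finite_psubset_induct)
  case (psubset A)
  define g where "g = (\<lambda>B. \<Prod>C\<in>Pow M - {{}}. h (B \<union> C))"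
  let ?R = "subset_prod (mult_on h g (Pow A - {{}})) * setfun_inverse (subset_prod h)"
  have R: "ord_ge_card_on A ?R"
  proof (rule ord_ge_card_on_mult_on[OF psubset.hyps(1) psubset.prems(1) order_refl])
    fix B assume "B \<in> Pow A - {{}}"
    then have "finite B" "B \<inter> M = {}"
      using psubset by (auto intro: finite_subset)
    then show "g B $ 0 = 1 \<and> fps_ord_ge (card B) (g B - 1)"
      using psubset.prems absorbed_factor_ord_ge unfolding g_def
      by (simp add: fps_prod_nth_0 admissible_def)
  qed (fact psubset.IH)
  have "relative_prod h M $$ A =
      (\<Sum>B\<in>Pow A. setfun_shift M (subset_prod h) $$ B * setfun_inverse (subset_prod h) $$ (A - B))"
    using psubset by (simp add: relative_prod_def setfun_nth_mult)
  also have "\<dots> = (\<Sum>B\<in>Pow A. subset_prod h $$ M *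
      (subset_prod (mult_on h g (Pow A - {{}})) $$ B * setfun_inverse (subset_prod h) $$ (A - B)))"
  proof (rule sum.cong[OF refl])
    fix B assume "B \<in> Pow A"
    then have "finite B" "B \<subseteq> A" "B \<inter> M = {}"
      using psubset by (auto intro: finite_subset)
    then show "setfun_shift M (subset_prod h) $$ B * setfun_inverse (subset_prod h) $$ (A - B) =
        subset_prod h $$ M * (subset_prod (mult_on h g (Pow A - {{}})) $$ B *
          setfun_inverse (subset_prod h) $$ (A - B))"
      using setfun_nth_shift_subset_prod[OF psubset.prems(1), of B A M] psubset.prems
      by (simp add: g_def mult.assoc)
  qed
  also have "\<dots> = subset_prod h $$ M * ?R $$ A"
    using psubset.hyps(1) by (simp add: setfun_nth_mult sum_distrib_left)
  finally have "relative_prod h M $$ A = subset_prod h $$ M * ?R $$ A" .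
  moreover have "fps_ord_ge (card A) (?R $$ A)"
    using R by (simp add: ord_ge_card_on_def)
  ultimately show ?case
    using fps_ord_ge_mult[of 0 "subset_prod h $$ M" "card A" "?R $$ A" "card A"] by simp
qed

section \<open>Factorization into string factors\<close>

definition string_factor :: "'i set \<Rightarrow> 'a \<Rightarrow> ('i, 'a::comm_ring_1 fps) setfun" where
  "string_factor K s = 1 + setfun_monom K (fps_const s * fps_X ^ (card K - 1))"

definition string_factors :: "('i set \<times> 'a) list \<Rightarrow> ('i, 'a::comm_ring_1 fps) setfun" where
  "string_factors L = (\<Prod>(K, s)\<leftarrow>L. string_factor K s)"

definition nonempty_blocks :: "('i set \<times> 'a) list \<Rightarrow> bool" where
  "nonempty_blocks L \<longleftrightarrow> (\<forall>(K, s)\<in>set L. finite K \<and> K \<noteq> {})"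

definition agree_on :: "'i set \<Rightarrow> ('i, 'a::zero) setfun \<Rightarrow> ('i, 'a) setfun \<Rightarrow> bool" where
  "agree_on U V W \<longleftrightarrow> (\<forall>J. J \<subseteq> U \<longrightarrow> V $$ J = W $$ J)"

definition factorizable_on :: "'i set \<Rightarrow> ('i, 'a::comm_ring_1 fps) setfun \<Rightarrow> bool" where
  "factorizable_on U V \<longleftrightarrow>
     (\<exists>L R. nonempty_blocks L \<and> ord_ge_card_on U R \<and> agree_on U V (string_factors L * R))"

lemma agree_on_mult: "finite U \<Longrightarrow> agree_on U V V' \<Longrightarrow> agree_on U (V * W) (V' * W)"
  unfolding agree_on_def by (auto simp: setfun_nth_mult intro!: sum.cong dest: finite_subset)

lemma string_factors_append: "string_factors (L @ L') = string_factors L * string_factors L'"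
  by (simp add: string_factors_def)

lemma factorizable_on_mult:
  assumes U: "finite U" and V: "factorizable_on U V"
    and L': "nonempty_blocks L'" and R': "ord_ge_card_on U R'"
  shows "factorizable_on U (V * (string_factors L' * R'))"
proof -
  obtain L R where L: "nonempty_blocks L" and R: "ord_ge_card_on U R"
    and VLR: "agree_on U V (string_factors L * R)"
    using V unfolding factorizable_on_def by blast
  have "agree_on U (V * (string_factors L' * R')) (string_factors L * R * (string_factors L' * R'))"
    by (rule agree_on_mult[OF U VLR])
  moreover have "string_factors L * R * (string_factors L' * R') = string_factors (L @ L') * (R * R')"
    by (simp add: string_factors_append mult_ac)
  ultimately have "agree_on U (V * (string_factors L' * R')) (string_factors (L @ L') * (R * R'))"
    by simp
  moreover have "nonempty_blocks (L @ L')"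
    using L L' by (auto simp: nonempty_blocks_def)
  ultimately show ?thesis
    using ord_ge_card_on_mult[OF U R R'] unfolding factorizable_on_def by blast
qed

lemma factorizable_on_agree_on: "factorizable_on U V \<Longrightarrow> agree_on U V W \<Longrightarrow> factorizable_on U W"
  unfolding factorizable_on_def agree_on_def by metis

lemma prod_list_one_plus_annihilating:
  fixes xs :: "'a::comm_ring_1 list"
  assumes "\<And>x y. x \<in> set xs \<Longrightarrow> y \<in> set xs \<Longrightarrow> x * y = 0"
  shows "(\<Prod>x\<leftarrow>xs. 1 + x) = 1 + sum_list xs"
  using assms
proof (induction xs)
  case (Cons a xs)
  have "\<forall>x\<in>set xs. a * x = 0"
    using Cons.prems by auto
  then have "(\<Sum>x\<leftarrow>xs. a * x) = 0"
    by (induction xs) auto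
  then have "a * sum_list xs = 0"
    by (simp add: sum_list_const_mult)
  then show ?case
    using Cons by (simp add: algebra_simps)
qed simp

text \<open>All terms of \<open>w\<close> are supported on supersets of \<open>M \<noteq> {}\<close>, so any two of them multiply
  to zero; hence the leading terms \<open>c_J t^(|J| - 1)\<close> of \<open>w\<close> split off as a product of string
  factors, and the remainder has one more order of vanishing.\<close>

definition leading_part :: "'i set \<Rightarrow> ('i, 'a::comm_ring_1 fps) setfun \<Rightarrow> ('i, 'a fps) setfun" where
  "leading_part U w = (\<Sum>J\<in>Pow U - {{}}.
     setfun_monom J (fps_const (w $$ J $ (card J - 1)) * fps_X ^ (card J - 1)))"

lemma setfun_nth_leading_part:
  assumes "finite U"
  shows "leading_part U w $$ K =
    (if K \<in> Pow U - {{}} then fps_const (w $$ K $ (card K - 1)) * fps_X ^ (card K - 1) else 0)"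
proof -
  have "leading_part U w $$ K = (\<Sum>J\<in>Pow U - {{}}.
      setfun_monom J (fps_const (w $$ J $ (card J - 1)) * fps_X ^ (card J - 1)) $$ K)"
    by (simp add: leading_part_def setfun_nth_sum)
  also have "\<dots> = (\<Sum>J\<in>Pow U - {{}}.
      if J = K then fps_const (w $$ K $ (card K - 1)) * fps_X ^ (card K - 1) else 0)"
    by (rule sum.cong) (auto simp: setfun_nth_monom intro: finite_subset[OF _ assms])
  finally show ?thesis
    using assms by simp
qed

lemma string_factors_eq_one_plus_leading_part:
  assumes U: "finite U" and M: "M \<noteq> {}" and supp: "\<And>J. w $$ J \<noteq> 0 \<Longrightarrow> M \<subseteq> J"
  shows "\<exists>L. nonempty_blocks L \<and> string_factors L = 1 + leading_part U w"
proof -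
  obtain Js where Js: "set Js = Pow U - {{}}" "distinct Js"
    using finite_distinct_list[of "Pow U - {{}}"] U by blast
  define x where "x J = setfun_monom J (fps_const (w $$ J $ (card J - 1)) * fps_X ^ (card J - 1))"
    for J
  define L where "L = map (\<lambda>J. (J, w $$ J $ (card J - 1))) Js"
  have supp_x: "M \<subseteq> K" if "x J $$ K \<noteq> 0" for J K
    using that supp by (cases "w $$ J = 0") (auto simp: x_def setfun_nth_monom split: if_splits)
  have "string_factors L = (\<Prod>y\<leftarrow>map x Js. 1 + y)"
    by (simp add: string_factors_def string_factor_def L_def x_def comp_def)
  also have "\<dots> = 1 + sum_list (map x Js)"
    by (rule prod_list_one_plus_annihilating)
       (auto intro!: setfun_mult_eq_0_if_supported_above[OF M] supp_x)
  also have "sum_list (map x Js) = leading_part U w"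
    using Js by (simp add: sum_list_distinct_conv_sum_set leading_part_def x_def)
  finally have "string_factors L = 1 + leading_part U w" .
  moreover have "nonempty_blocks L"
    using Js U by (auto simp: nonempty_blocks_def L_def intro: finite_subset)
  ultimately show ?thesis
    by blast
qed

lemma ord_ge_card_on_one_plus_diff_leading_part:
  assumes U: "finite U" and M: "M \<noteq> {}" and supp: "\<And>J. w $$ J \<noteq> 0 \<Longrightarrow> M \<subseteq> J"
    and ord: "\<And>J. J \<subseteq> U \<Longrightarrow> fps_ord_ge (card J - 1) (w $$ J)"
  shows "ord_ge_card_on U (1 + (w - leading_part U w))"
  unfolding ord_ge_card_on_def
proof (intro conjI allI impI)
  show "(1 + (w - leading_part U w)) $$ {} = 1"
    using U M supp by (auto simp: setfun_nth_one setfun_nth_leading_part)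
  fix J assume J: "J \<subseteq> U"
  show "fps_ord_ge (card J) ((1 + (w - leading_part U w)) $$ J)"
  proof (cases "J = {}")
    case False
    have "fps_ord_ge (card J) (w $$ J - fps_const (w $$ J $ (card J - 1)) * fps_X ^ (card J - 1))"
      using ord[OF J] by (auto simp: fps_ord_ge_def less_Suc_eq_le le_less)
    then show ?thesis
      using U J False by (simp add: setfun_nth_one setfun_nth_leading_part)
  qed simp
qed

lemma one_plus_factorization:
  fixes w :: "('i, 'a::comm_ring_1 fps) setfun"
  assumes U: "finite U" and M: "M \<noteq> {}" and supp: "\<And>J. w $$ J \<noteq> 0 \<Longrightarrow> M \<subseteq> J"
    and ord: "\<And>J. J \<subseteq> U \<Longrightarrow> fps_ord_ge (card J - 1) (w $$ J)"
  shows "\<exists>L R. nonempty_blocks L \<and> ord_ge_card_on U R \<and> 1 + w = string_factors L * R"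
proof -
  let ?p = "leading_part U w"
  obtain L where L: "nonempty_blocks L" "string_factors L = 1 + ?p"
    using string_factors_eq_one_plus_leading_part[OF U M supp] by blast
  have supp_p: "M \<subseteq> K" if "?p $$ K \<noteq> 0" for K
    using that U supp by (cases "w $$ K = 0") (auto simp: setfun_nth_leading_part split: if_splits)
  have supp_diff: "M \<subseteq> K" if "(w - ?p) $$ K \<noteq> 0" for K
    using that supp supp_p by (cases "w $$ K = 0") auto
  have "?p * (w - ?p) = 0"
    using setfun_mult_eq_0_if_supported_above[OF M supp_p supp_diff] .
  then have "1 + w = string_factors L * (1 + (w - ?p))"
    unfolding L(2) by (simp add: algebra_simps)
  then show ?thesis
    using L(1) ord_ge_card_on_one_plus_diff_leading_part[OF U M supp ord] by blast
qed

lemma one_plus_monom_relative_prod_factorization: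
  assumes U: "finite U" and h: "admissible h" and M: "finite M" "M \<noteq> {}"
    and c: "fps_ord_ge (card M - 1) c"
  shows "\<exists>L R. nonempty_blocks L \<and> ord_ge_card_on U R \<and>
    1 + setfun_monom M c * relative_prod h M = string_factors L * R"
proof (rule one_plus_factorization[OF U M(2)])
  show "M \<subseteq> J" if "(setfun_monom M c * relative_prod h M) $$ J \<noteq> 0" for J
    using that M(1) setfun_nth_infinite[of J]
    by (cases "finite J") (auto simp: setfun_nth_monom_mult split: if_splits)
  fix J assume "J \<subseteq> U"
  then have J: "finite J"
    using U by (rule finite_subset)
  show "fps_ord_ge (card J - 1) ((setfun_monom M c * relative_prod h M) $$ J)"
  proof (cases "M \<subseteq> J")
    case True
    have "fps_ord_ge (card J - 1) (c * relative_prod h M $$ (J - M))"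
    proof (rule fps_ord_ge_mult[OF c relative_prod_ord_ge[OF _ h M]])
      show "card J - 1 \<le> card M - 1 + card (J - M)"
        using True J M by (simp add: card_Diff_subset card_mono)
    qed (use J in auto)
    then show ?thesis
      using True J M(1) by (simp add: setfun_nth_monom_mult)
  qed (use J M(1) in \<open>simp add: setfun_nth_monom_mult\<close>)
qed

lemma factorizable_on_subset_prod_one:
  assumes U: "finite U"
  shows "factorizable_on U (subset_prod (\<lambda>_. 1 :: 'a::comm_ring_1 fps))"
proof -
  obtain ks where ks: "set ks = U" "distinct ks"
    using finite_distinct_list[OF U] by blast
  define L where "L = map (\<lambda>i. ({i}, 1 :: 'a)) ks"
  have L: "string_factors L = (\<Prod>i\<leftarrow>ks. 1 + setfun_monom {i} 1)"
    by (simp add: string_factors_def string_factor_def L_def comp_def)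
  have prod_nth: "(\<Prod>i\<leftarrow>ks. 1 + setfun_monom {i} 1) $$ J = (if J \<subseteq> set ks then 1 else 0)"
    if "finite J" for J
    using ks(2) that
  proof (induction ks arbitrary: J)
    case (Cons i ks)
    then show ?case
      by (auto simp: distrib_right setfun_nth_monom_mult)
  qed (simp add: setfun_nth_one)
  have "agree_on U (subset_prod (\<lambda>_. 1)) (string_factors L * 1)"
    unfolding agree_on_def
  proof (intro allI impI)
    fix J assume J: "J \<subseteq> U"
    then have "finite J"
      using U by (rule finite_subset)
    then show "subset_prod (\<lambda>_. 1) $$ J = (string_factors L * 1) $$ J"
      using prod_nth[of J] J ks by (simp add: setfun_nth_subset_prod L)
  qed
  moreover have "nonempty_blocks L"
    by (simp add: nonempty_blocks_def L_def)
  ultimately show ?thesis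
    unfolding factorizable_on_def using ord_ge_card_on_one by blast
qed

definition restrict_family :: "('i set \<Rightarrow> 'a::comm_ring_1 fps) \<Rightarrow> 'i set set \<Rightarrow> 'i set \<Rightarrow> 'a fps" where
  "restrict_family h S B = (if B \<in> S then h B else 1)"

lemma agree_on_subset_prod_restrict_family:
  assumes h: "admissible h" and U: "finite U"
  shows "agree_on U (subset_prod (restrict_family h (Pow U - {{}}))) (subset_prod h)"
  unfolding agree_on_def
proof (intro allI impI)
  fix J assume J: "J \<subseteq> U"
  have "restrict_family h (Pow U - {{}}) K = h K" if "K \<in> Pow J" for K
    using that J h by (auto simp: restrict_family_def admissible_def)
  then show "subset_prod (restrict_family h (Pow U - {{}})) $$ J = subset_prod h $$ J"
    using finite_subset[OF J U] by (simp add: setfun_nth_subset_prod)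
qed

lemma factorizable_on_subset_prod:
  assumes h: "admissible h" and U: "finite U"
  shows "factorizable_on U (subset_prod h)"
proof -
  have "factorizable_on U (subset_prod (restrict_family h S))" if "S \<subseteq> Pow U - {{}}" for S
  proof -
    have "finite S"
      using that U by (meson finite_Diff finite_Pow_iff finite_subset)
    then show ?thesis
      using that
    proof (induction S rule: finite_induct)
      case empty
      then show ?case
        using factorizable_on_subset_prod_one[OF U] by (simp add: restrict_family_def)
    next
      case (insert M S)
      let ?h = "restrict_family h S"
      have M: "finite M" "M \<noteq> {}"
        using insert.prems U by (auto intro: finite_subset)
      have h': "admissible ?h"
        using h insert.prems by (auto simp: admissible_def restrict_family_def)
      have "restrict_family h (insert M S) = ?h(M := ?h M * h M)"
        using insert.hyps by (auto simp: restrict_family_def fun_eq_iff)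
      then have eq: "subset_prod (restrict_family h (insert M S)) =
          subset_prod ?h * (1 + setfun_monom M (h M - 1) * relative_prod ?h M)"
        using subset_prod_fun_upd[OF h' M] by simp
      obtain L R where "nonempty_blocks L" "ord_ge_card_on U R"
        "1 + setfun_monom M (h M - 1) * relative_prod ?h M = string_factors L * R"
        using one_plus_monom_relative_prod_factorization[OF U h' M, of "h M - 1"] h M(1)
        by (auto simp: admissible_def)
      then show ?case
        unfolding eq using factorizable_on_mult[OF U] insert by simp
    qed
  qed
  moreover have "agree_on U (subset_prod (restrict_family h (Pow U - {{}}))) (subset_prod h)"
    using h U by (rule agree_on_subset_prod_restrict_family)
  ultimately show ?thesis
    by (blast intro: factorizable_on_agree_on)
qed

section \<open>Polynomial functions and mixed differences\<close>

definition polyfun :: "nat \<Rightarrow> ('a::comm_ring_1 \<Rightarrow> 'a) \<Rightarrow> bool" where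
  "polyfun d f \<longleftrightarrow> (\<exists>p. degree p \<le> d \<and> f = poly p)"

lemma polyfun_const: "polyfun d (\<lambda>_. c)"
  unfolding polyfun_def by (intro exI[of _ "[:c:]"]) (auto simp: fun_eq_iff)

lemma polyfun_id: "polyfun 1 (\<lambda>y. y)"
  unfolding polyfun_def by (intro exI[of _ "[:0, 1:]"]) (auto simp: fun_eq_iff)

lemma polyfun_mono: "polyfun d f \<Longrightarrow> d \<le> e \<Longrightarrow> polyfun e f"
  unfolding polyfun_def using order_trans by blast

lemma polyfun_add: "polyfun d f \<Longrightarrow> polyfun d g \<Longrightarrow> polyfun d (\<lambda>y. f y + g y)"
  unfolding polyfun_def
proof (elim exE conjE)
  fix p q assume "degree p \<le> d" "f = poly p" "degree q \<le> d" "g = poly q"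
  then show "\<exists>r. degree r \<le> d \<and> (\<lambda>y. f y + g y) = poly r"
    by (intro exI[of _ "p + q"]) (auto simp: fun_eq_iff intro: order.trans[OF degree_add_le_max])
qed

lemma polyfun_mult:
  assumes "polyfun d f" "polyfun e g" "d + e \<le> k"
  shows "polyfun k (\<lambda>y. f y * g y)"
proof -
  obtain p q where "degree p \<le> d" "f = poly p" "degree q \<le> e" "g = poly q"
    using assms unfolding polyfun_def by blast
  then show ?thesis
    unfolding polyfun_def using assms(3)
    by (intro exI[of _ "p * q"]) (auto simp: fun_eq_iff intro: order.trans[OF degree_mult_le])
qed

lemma polyfun_cmult: "polyfun d f \<Longrightarrow> polyfun d (\<lambda>y. c * f y)"
  using polyfun_mult[OF polyfun_const[of 0 c]] by simp

lemma polyfun_sum: "(\<And>i. i \<in> S \<Longrightarrow> polyfun d (F i)) \<Longrightarrow> polyfun d (\<lambda>y. \<Sum>i\<in>S. F i y)"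
  by (induction S rule: infinite_finite_induct) (simp_all add: polyfun_const polyfun_add)

lemma polyfun_power: "polyfun k (\<lambda>y. y ^ k)"
  by (induction k) (auto simp: polyfun_const intro: polyfun_mult[OF polyfun_id])

lemma polyfun_power_diff: "polyfun (k - 1) (\<lambda>y. (y + c) ^ k - y ^ k)"
proof (induction k)
  case (Suc k)
  have "(\<lambda>y. (y + c) ^ Suc k - y ^ Suc k) = (\<lambda>y. (y + c) * ((y + c) ^ k - y ^ k) + c * y ^ k)"
    by (simp add: fun_eq_iff algebra_simps)
  moreover have "polyfun k (\<lambda>y. (y + c) * ((y + c) ^ k - y ^ k))"
  proof (cases k)
    case (Suc j)
    then show ?thesis
      using polyfun_mult[OF polyfun_add[OF polyfun_id polyfun_const] Suc.IH] by simp
  qed (simp add: polyfun_const)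
  ultimately show ?case
    using polyfun_add[OF _ polyfun_cmult[OF polyfun_power]] by simp
qed (simp add: polyfun_const)

lemma polyfun_forward_diff: "polyfun (Suc d) f \<Longrightarrow> polyfun d (\<lambda>y. f (y + c) - f y)"
proof -
  assume "polyfun (Suc d) f"
  then obtain p where p: "degree p \<le> Suc d" "f = poly p"
    unfolding polyfun_def by blast
  have "(\<lambda>y. f (y + c) - f y) = (\<lambda>y. \<Sum>i\<le>degree p. coeff p i * ((y + c) ^ i - y ^ i))"
    by (simp add: fun_eq_iff p(2) poly_altdef right_diff_distrib sum_subtractf)
  moreover have "polyfun d (\<lambda>y. coeff p i * ((y + c) ^ i - y ^ i))" if "i \<le> degree p" for i
    by (rule polyfun_mono[OF polyfun_cmult[OF polyfun_power_diff]]) (use that p(1) in simp)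
  ultimately show ?thesis
    using polyfun_sum[of "{..degree p}" d "\<lambda>i y. coeff p i * ((y + c) ^ i - y ^ i)"] by simp
qed

lemma polyfun_0_imp_const: "polyfun 0 f \<Longrightarrow> f x = f y"
  unfolding polyfun_def by (auto elim!: degree_eq_zeroE)

definition mixed_diff :: "('i \<Rightarrow> 'a::comm_ring_1) \<Rightarrow> ('a \<Rightarrow> 'a) \<Rightarrow> 'i set \<Rightarrow> 'a" where
  "mixed_diff a F K = (\<Sum>L\<in>Pow K. (-1) ^ card (K - L) * F (sum a L))"

lemma sum_Pow_insert:
  assumes "i \<notin> K"
  shows "sum f (Pow (insert i K)) = sum f (Pow K) + (\<Sum>L\<in>Pow K. f (insert i L))"
proof -
  have "inj_on (insert i) (Pow K)"
    using assms by (intro inj_onI) (metis PowD insert_ident subsetD)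
  moreover have "Pow K \<inter> insert i ` Pow K = {}"
    using assms by auto
  ultimately show ?thesis
    by (cases "finite K") (simp_all add: Pow_insert sum.union_disjoint sum.reindex)
qed

lemma prod_Pow_insert:
  assumes "i \<notin> K"
  shows "prod f (Pow (insert i K)) = prod f (Pow K) * (\<Prod>L\<in>Pow K. f (insert i L))"
proof -
  have "inj_on (insert i) (Pow K)"
    using assms by (intro inj_onI) (metis PowD insert_ident subsetD)
  moreover have "Pow K \<inter> insert i ` Pow K = {}"
    using assms by auto
  ultimately show ?thesis
    by (cases "finite K") (simp_all add: Pow_insert prod.union_disjoint prod.reindex)
qed

text \<open>Peeling off one element \<open>i\<close> turns a mixed difference of order \<open>card K\<close> into one of
  order \<open>card K - 1\<close> of the forward difference \<open>y \<mapsto> F (y + a i) - F y\<close>.\<close>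

lemma mixed_diff_polyfun_eq_0:
  assumes "finite K" "polyfun d F" "d < card K"
  shows "mixed_diff a F K = 0"
  using assms
proof (induction K arbitrary: d F rule: finite_induct)
  case (insert i K)
  define G where "G y = F (y + a i) - F y" for y
  have "mixed_diff a F (insert i K) = mixed_diff a G K"
  proof -
    have "(-1) ^ card (insert i K - L) * F (sum a L) +
        (-1) ^ card (insert i K - insert i L) * F (sum a (insert i L)) =
        (-1) ^ card (K - L) * G (sum a L)" if "L \<subseteq> K" for L
    proof -
      have "insert i K - L = insert i (K - L)" "insert i K - insert i L = K - L"
        using that insert.hyps by auto
      moreover have "finite L" "i \<notin> L"
        using that insert.hyps by (auto intro: finite_subset)
      ultimately show ?thesis
        using insert.hyps by (simp add: G_def algebra_simps)
    qed
    then show ?thesis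
      unfolding mixed_diff_def sum_Pow_insert[OF insert.hyps(2)] sum.distrib[symmetric]
      by (intro sum.cong) auto
  qed
  also have "\<dots> = 0"
  proof (cases d)
    case 0
    then have "G = (\<lambda>_. 0)"
      using polyfun_0_imp_const[of F] insert.prems by (auto simp: G_def fun_eq_iff)
    then show ?thesis
      by (simp add: mixed_diff_def)
  next
    case (Suc d')
    then show ?thesis
      using insert polyfun_forward_diff[of d' F "a i"] unfolding G_def by simp
  qed
  finally show ?case .
qed simp

section \<open>The series \<open>q\<close>\<close>

definition q_fps :: "real \<Rightarrow> real fps" where
  "q_fps x = Abs_fps (\<lambda>m. Qpol (int m) x)"

definition q_deriv_coeff :: "real \<Rightarrow> real" where
  "q_deriv_coeff x = - x * (2 * x + 1) / 4"

lemma q_fps_nth: "q_fps x $ m = (-1) ^ m / (2 ^ m * fact m) * (\<Prod>k\<in>{1..2 * m}. x + 1 - real k / 2)"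
  by (simp add: q_fps_def Qpol_def)

lemma q_fps_nth_0 [simp]: "q_fps x $ 0 = 1"
  by (simp add: q_fps_nth)

lemma q_fps_0: "q_fps 0 = 1"
proof (rule fps_ext)
  fix m
  show "q_fps 0 $ m = 1 $ m"
  proof (cases m)
    case (Suc j)
    have "(\<Prod>k\<in>{1..2 * m}. (0::real) + 1 - real k / 2) = 0"
      by (rule prod_zero) (use Suc in \<open>auto intro!: bexI[of _ 2]\<close>)
    then show ?thesis
      using Suc by (simp add: q_fps_nth)
  qed simp
qed

lemma prod_half_steps_Suc:
  "(\<Prod>k\<in>{1..2 * Suc m}. x + 1 - real k / 2) = (x + 1/2) * x * (\<Prod>k\<in>{1..2 * m}. x - real k / 2)"
proof -
  let ?g = "\<lambda>k. x + 1 - real k / 2"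
  let ?N = "Suc (Suc (2 * m))"
  have "prod ?g {1..2 * Suc m} = ?g 1 * prod ?g {Suc 1..?N}"
    by (simp only: mult_Suc_right add_2_eq_Suc) (rule prod.atLeast_Suc_atMost, simp)
  also have "prod ?g {Suc 1..?N} = ?g (Suc 1) * prod ?g {Suc (Suc 1)..?N}"
    by (rule prod.atLeast_Suc_atMost) simp
  also have "{Suc (Suc 1)..?N} = {1 + 2..2 * m + 2}"
    by auto
  also have "prod ?g {1 + 2..2 * m + 2} = (\<Prod>k\<in>{1..2 * m}. x - real k / 2)"
    by (simp only: prod.shift_bounds_cl_nat_ivl) (rule prod.cong, simp_all add: field_simps)
  finally show ?thesis
    by (simp add: mult.assoc)
qed

lemma fps_deriv_q_fps: "fps_deriv (q_fps x) = fps_const (q_deriv_coeff x) * q_fps (x - 1)"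
proof (rule fps_ext)
  fix m
  let ?P = "\<Prod>k\<in>{1..2 * m}. x - real k / 2"
  define c where "c = (-1) ^ m / (2 ^ m * fact m :: real)"
  have "(-1) ^ Suc m / (2 ^ Suc m * fact (Suc m)) = - c / (2 * (real m + 1))"
    by (simp add: c_def field_simps)
  moreover have "fps_deriv (q_fps x) $ m = real (m + 1) * q_fps x $ Suc m"
    by simp
  ultimately have "fps_deriv (q_fps x) $ m = real (m + 1) * (- c / (2 * (real m + 1)) * ((x + 1/2) * x * ?P))"
    by (simp only: q_fps_nth prod_half_steps_Suc)
  also have "\<dots> = q_deriv_coeff x * (c * ?P)"
    by (simp add: q_deriv_coeff_def field_simps)
  also have "\<dots> = (fps_const (q_deriv_coeff x) * q_fps (x - 1)) $ m"
    by (simp add: q_fps_nth c_def)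
  finally show "fps_deriv (q_fps x) $ m = (fps_const (q_deriv_coeff x) * q_fps (x - 1)) $ m" .
qed

definition fps_logderiv :: "'a::field fps \<Rightarrow> 'a fps" where
  "fps_logderiv F = fps_deriv F * inverse F"

lemma fps_logderiv_mult:
  assumes "F $ 0 \<noteq> 0" "G $ 0 \<noteq> 0"
  shows "fps_logderiv (F * G) = fps_logderiv F + fps_logderiv G"
proof -
  have "fps_logderiv (F * G) =
      fps_deriv F * inverse F * (G * inverse G) + fps_deriv G * inverse G * (F * inverse F)"
    unfolding fps_logderiv_def fps_inverse_mult by (simp add: algebra_simps)
  then show ?thesis
    using assms by (simp add: inverse_mult_eq_1' fps_logderiv_def)
qed

lemma fps_logderiv_inverse:
  assumes "F $ 0 \<noteq> 0"
  shows "fps_logderiv (inverse F) = - fps_logderiv F"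
proof -
  have "fps_logderiv (inverse F) = - fps_deriv F * inverse F * (inverse F * F)"
    unfolding fps_logderiv_def fps_inverse_deriv[OF assms] using assms
    by (simp add: power2_eq_square algebra_simps)
  then show ?thesis
    using assms by (simp add: inverse_mult_eq_1 fps_logderiv_def)
qed

lemma fps_logderiv_prod:
  assumes "\<And>x. x \<in> S \<Longrightarrow> f x $ 0 \<noteq> 0"
  shows "fps_logderiv (prod f S) = (\<Sum>x\<in>S. fps_logderiv (f x))"
  using assms
proof (induction S rule: infinite_finite_induct)
  case (insert x F)
  have "prod f F $ 0 \<noteq> 0"
    using insert by (simp add: fps_prod_nth_0)
  then show ?case
    using insert by (simp add: fps_logderiv_mult)
qed (simp_all add: fps_logderiv_def)

lemma fps_ord_ge_minus_1_if_logderiv: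
  fixes F :: "'a::field_char_0 fps"
  assumes F0: "F $ 0 = 1" and ord: "fps_ord_ge r (fps_logderiv F)"
  shows "fps_ord_ge (Suc r) (F - 1)"
proof -
  have "fps_deriv F = fps_logderiv F * F"
    using inverse_mult_eq_1[of F] F0 by (simp add: fps_logderiv_def mult.assoc)
  then have "fps_ord_ge r (fps_deriv F)"
    using fps_ord_ge_mult[OF ord fps_ord_ge_0[of F]] by simp
  then show ?thesis
    unfolding fps_ord_ge_def
  proof (intro allI impI)
    fix j assume j: "j < Suc r" and d: "\<forall>i<r. fps_deriv F $ i = 0"
    show "(F - 1) $ j = 0"
    proof (cases j)
      case (Suc i)
      then have "i < r"
        using j by simp
      then have "of_nat (Suc i) * F $ Suc i = 0"
        using d by (metis fps_deriv_nth Suc_eq_plus1)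
      then show ?thesis
        using Suc by (simp del: of_nat_Suc)
    qed (simp add: F0)
  qed
qed

text \<open>The coefficients of the logarithmic derivative of \<open>q(x)\<close> are polynomial in \<open>x\<close>: by
  \<open>q' = c(x) q(x - 1)\<close>, it equals \<open>c(x) \<rho>(x)\<close> with \<open>\<rho>(x) = q(x - 1) / q(x)\<close>, and \<open>\<rho>\<close>
  satisfies a Riccati equation whose recursion raises the degree in \<open>x\<close> by one per order in
  \<open>t\<close>.\<close>

definition q_ratio :: "real \<Rightarrow> real fps" where
  "q_ratio x = q_fps (x - 1) * inverse (q_fps x)"

lemma fps_deriv_q_ratio:
  "fps_deriv (q_ratio x) = q_ratio x *
     (fps_const (q_deriv_coeff (x - 1)) * q_ratio (x - 1) - fps_const (q_deriv_coeff x) * q_ratio x)"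
proof -
  let ?A = "q_fps (x - 1)" and ?iB = "inverse (q_fps x)"
  have "q_ratio (x - 1) * ?A = q_fps (x - 1 - 1) * (inverse ?A * ?A)"
    by (simp add: q_ratio_def mult.assoc)
  then have dA: "fps_deriv ?A = fps_const (q_deriv_coeff (x - 1)) * (q_ratio (x - 1) * ?A)"
    by (simp add: fps_deriv_q_fps inverse_mult_eq_1)
  have diB: "fps_deriv ?iB = - (fps_const (q_deriv_coeff x) * ?A) * ?iB ^ 2"
    using fps_inverse_deriv[of "q_fps x"] by (simp add: fps_deriv_q_fps)
  have "fps_deriv (q_ratio x) = fps_deriv ?A * ?iB + ?A * fps_deriv ?iB"
    by (simp add: q_ratio_def)
  also have "\<dots> = fps_const (q_deriv_coeff (x - 1)) * q_ratio (x - 1) * (?A * ?iB) -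
      fps_const (q_deriv_coeff x) * (?A * ?iB) * (?A * ?iB)"
    unfolding dA diB by (simp add: algebra_simps power2_eq_square)
  finally show ?thesis
    by (simp add: q_ratio_def algebra_simps)
qed

lemma q_ratio_nth_Suc:
  "q_ratio x $ Suc m = (1 / real (Suc m)) * (\<Sum>i=0..m. q_ratio x $ i *
     (q_deriv_coeff (x - 1) * q_ratio (x - 1) $ (m - i) - q_deriv_coeff x * q_ratio x $ (m - i)))"
proof -
  have "real (Suc m) * q_ratio x $ Suc m = fps_deriv (q_ratio x) $ m"
    by simp
  also have "\<dots> = (\<Sum>i=0..m. q_ratio x $ i *
      (q_deriv_coeff (x - 1) * q_ratio (x - 1) $ (m - i) - q_deriv_coeff x * q_ratio x $ (m - i)))"
    unfolding fps_deriv_q_ratio fps_mult_nth by simp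
  finally show ?thesis
    by (simp add: field_simps del: of_nat_Suc)
qed

lemma polyfun_q_deriv_coeff: "polyfun 2 q_deriv_coeff"
proof -
  have "polyfun 2 (\<lambda>y :: real. y * ((- 1/2) * y + (- 1/4)))"
    by (rule polyfun_mult[OF polyfun_id polyfun_add[OF polyfun_cmult[OF polyfun_id] polyfun_const]]) simp
  moreover have "(\<lambda>y :: real. y * ((- 1/2) * y + (- 1/4))) = q_deriv_coeff"
    by (simp add: fun_eq_iff q_deriv_coeff_def field_simps)
  ultimately show ?thesis
    by simp
qed

lemma polyfun_q_ratio_nth: "polyfun m (\<lambda>x. q_ratio x $ m)"
proof (induction m rule: less_induct)
  case (less m)
  show ?case
  proof (cases m)
    case 0
    then show ?thesis
      by (simp add: q_ratio_def polyfun_const)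
  next
    case (Suc k)
    have D: "polyfun (j + 1) (\<lambda>x. q_deriv_coeff (x - 1) * q_ratio (x - 1) $ j -
        q_deriv_coeff x * q_ratio x $ j)" if "j \<le> k" for j
    proof -
      have "polyfun (Suc (j + 1)) (\<lambda>x. q_deriv_coeff x * q_ratio x $ j)"
        by (rule polyfun_mult[OF polyfun_q_deriv_coeff less[of j]]) (use that Suc in simp_all)
      from polyfun_forward_diff[OF this, of "- 1"] show ?thesis
        by simp
    qed
    have "polyfun (Suc k) (\<lambda>x. \<Sum>i=0..k. q_ratio x $ i * (q_deriv_coeff (x - 1) *
        q_ratio (x - 1) $ (k - i) - q_deriv_coeff x * q_ratio x $ (k - i)))"
      by (rule polyfun_sum, rule polyfun_mult[OF less D]) (use Suc in auto)
    from polyfun_cmult[OF this, of "1 / real (Suc k)"] show ?thesis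
      unfolding Suc q_ratio_nth_Suc by simp
  qed
qed

lemma polyfun_logderiv_q_fps_nth: "polyfun (m + 2) (\<lambda>x. fps_logderiv (q_fps x) $ m)"
proof -
  have "fps_logderiv (q_fps x) $ m = q_deriv_coeff x * q_ratio x $ m" for x
    by (simp add: fps_logderiv_def fps_deriv_q_fps q_ratio_def mult.assoc)
  then show ?thesis
    using polyfun_mult[OF polyfun_q_deriv_coeff polyfun_q_ratio_nth[of m]] by simp
qed

section \<open>Moebius inversion of \<open>q\<close>\<close>

definition moebius_factor :: "('i \<Rightarrow> 'a) \<Rightarrow> ('a \<Rightarrow> 'a::field fps) \<Rightarrow> 'i set \<Rightarrow> 'a fps" where
  "moebius_factor a Q K =
     (\<Prod>L\<in>Pow K. if even (card (K - L)) then Q (sum a L) else inverse (Q (sum a L)))"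

lemma moebius_factor_insert:
  assumes K: "finite K" "j \<notin> K" and Q: "\<And>y. Q y $ 0 \<noteq> 0"
  shows "moebius_factor a Q (insert j K) = moebius_factor a (\<lambda>y. Q (y + a j) * inverse (Q y)) K"
proof -
  let ?Q' = "\<lambda>y. Q (y + a j) * inverse (Q y)"
  let ?\<phi> = "\<lambda>Q K L. if even (card (K - L)) then Q (sum a L) else inverse (Q (sum a L))"
  have "?\<phi> Q (insert j K) L * ?\<phi> Q (insert j K) (insert j L) = ?\<phi> ?Q' K L" if "L \<subseteq> K" for L
  proof -
    have "insert j K - L = insert j (K - L)" "insert j K - insert j L = K - L"
      using that K by auto
    moreover have "finite L" "j \<notin> L"
      using that K by (auto intro: finite_subset)
    ultimately show ?thesis
      using K Q by (simp add: fps_inverse_mult add.commute mult.commute)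
  qed
  then show ?thesis
    unfolding moebius_factor_def prod_Pow_insert[OF K(2)] prod.distrib[symmetric]
    by (intro prod.cong) auto
qed

lemma prod_Pow_moebius_factor:
  assumes "finite I" "\<And>y. Q y $ 0 \<noteq> 0"
  shows "(\<Prod>K\<in>Pow I. moebius_factor a Q K) = Q (sum a I)"
  using assms
proof (induction I arbitrary: Q rule: finite_induct)
  case (insert j I)
  let ?Q' = "\<lambda>y. Q (y + a j) * inverse (Q y)"
  have Q': "?Q' y $ 0 \<noteq> 0" for y
    using insert.prems by simp
  have "(\<Prod>K\<in>Pow I. moebius_factor a Q (insert j K)) = (\<Prod>K\<in>Pow I. moebius_factor a ?Q' K)"
    using insert.hyps insert.prems by (intro prod.cong) (auto intro: moebius_factor_insert finite_subset)
  then have "(\<Prod>K\<in>Pow (insert j I). moebius_factor a Q K) =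
      Q (sum a I + a j) * (inverse (Q (sum a I)) * Q (sum a I))"
    using insert.IH[OF Q'] insert.IH[OF insert.prems] insert.hyps
    by (simp add: prod_Pow_insert mult_ac)
  then show ?case
    using insert.hyps insert.prems by (simp add: inverse_mult_eq_1 add.commute)
qed (simp add: moebius_factor_def)

text \<open>The logarithmic derivative of \<open>moebius_factor a q_fps K\<close> is a mixed difference of order
  \<open>card K\<close> of the coefficients of \<open>fps_logderiv (q_fps x)\<close>, which are polynomial of degree
  \<open>m + 2\<close> in \<open>x\<close> at \<open>t ^ m\<close>; hence it vanishes to order \<open>card K - 2\<close>.\<close>

lemma admissible_moebius_factor_q_fps:
  fixes a :: "'i \<Rightarrow> real"
  shows "admissible (moebius_factor a q_fps)"
  unfolding admissible_def
proof (intro conjI allI impI)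
  show "moebius_factor a q_fps {} = 1"
    by (simp add: moebius_factor_def q_fps_0)
  fix K :: "'i set"
  have nth_0: "moebius_factor a q_fps K $ 0 = 1"
    by (auto simp: moebius_factor_def fps_prod_nth_0 intro!: prod.neutral)
  then show "moebius_factor a q_fps K $ 0 = 1" .
  assume K: "finite K"
  have "fps_logderiv (moebius_factor a q_fps K) =
      (\<Sum>L\<in>Pow K. fps_const ((-1) ^ card (K - L)) * fps_logderiv (q_fps (sum a L)))"
  proof -
    have "fps_const (-1) * F = - F" for F :: "real fps"
      by (simp add: fps_eq_iff)
    then show ?thesis
      unfolding moebius_factor_def
      by (subst fps_logderiv_prod) (auto simp: fps_logderiv_inverse intro!: sum.cong)
  qed
  then have "fps_logderiv (moebius_factor a q_fps K) $ m =
      mixed_diff a (\<lambda>x. fps_logderiv (q_fps x) $ m) K" for m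
    by (simp add: mixed_diff_def fps_sum_nth)
  then have "fps_ord_ge (card K - 2) (fps_logderiv (moebius_factor a q_fps K))"
    using mixed_diff_polyfun_eq_0[OF K polyfun_logderiv_q_fps_nth]
    unfolding fps_ord_ge_def by simp
  from fps_ord_ge_minus_1_if_logderiv[OF nth_0 this]
  show "fps_ord_ge (card K - 1) (moebius_factor a q_fps K - 1)"
    by (rule fps_ord_ge_mono) simp
qed

lemma setfun_nth_subset_prod_moebius_factor_q_fps:
  "finite I \<Longrightarrow> subset_prod (moebius_factor a q_fps) $$ I = q_fps (sum a I)"
  by (simp add: setfun_nth_subset_prod prod_Pow_moebius_factor)

section \<open>Ordered partitions and tuples\<close>

definition insert_at :: "nat \<Rightarrow> 'a \<Rightarrow> 'a list \<Rightarrow> 'a list" where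
  "insert_at j x xs = take j xs @ x # drop j xs"

definition remove_at :: "nat \<Rightarrow> 'a list \<Rightarrow> 'a list" where
  "remove_at j xs = take j xs @ drop (Suc j) xs"

lemma length_insert_at [simp]: "j \<le> length xs \<Longrightarrow> length (insert_at j x xs) = Suc (length xs)"
  by (simp add: insert_at_def)

lemma nth_insert_at:
  "j \<le> length xs \<Longrightarrow> insert_at j x xs ! i = (if i < j then xs ! i else if i = j then x else xs ! (i - 1))"
  by (auto simp: insert_at_def nth_append min_def nth_Cons')

lemma length_remove_at [simp]: "j < length xs \<Longrightarrow> length (remove_at j xs) = length xs - 1"
  by (simp add: remove_at_def)

lemma nth_remove_at:
  "j < length xs \<Longrightarrow> i < length xs - 1 \<Longrightarrow> remove_at j xs ! i = (if i < j then xs ! i else xs ! Suc i)"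
  by (auto simp: remove_at_def nth_append min_def)

lemma insert_at_remove_at: "j < length xs \<Longrightarrow> insert_at j (xs ! j) (remove_at j xs) = xs"
  by (simp add: insert_at_def remove_at_def min_def Cons_nth_drop_Suc)

lemma remove_at_insert_at: "j \<le> length xs \<Longrightarrow> remove_at j (insert_at j x xs) = xs"
  by (simp add: insert_at_def remove_at_def min_def)

lemma mset_insert_at: "mset (insert_at j x xs) = add_mset x (mset xs)"
  by (metis insert_at_def mset.simps(2) mset_append union_mset_add_mset_right append_take_drop_id)

lemma sum_list_insert_at: "sum_list (insert_at j x xs) = x + sum_list (xs :: 'a::comm_monoid_add list)"
  by (simp flip: sum_mset_sum_list add: mset_insert_at)

lemma mset_remove_at: "j < length xs \<Longrightarrow> add_mset (xs ! j) (mset (remove_at j xs)) = mset xs"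
  by (metis insert_at_remove_at mset_insert_at)

lemma prod_insert_at_reindex:
  assumes "j \<le> m" "length xs = m" "length ys = m"
  shows "(\<Prod>i\<in>{..<Suc m} - {j}. F (insert_at j x xs ! i) (insert_at j y ys ! i)) =
    (\<Prod>i<m. F (xs ! i) (ys ! i))"
  by (rule prod.reindex_bij_witness[of _ "\<lambda>i. if i < j then i else Suc i" "\<lambda>i. if i < j then i else i - 1"])
     (use assms in \<open>auto simp: nth_insert_at\<close>)

definition ordered_partitions :: "'a set \<Rightarrow> nat \<Rightarrow> 'a set list set" where
  "ordered_partitions U k = {Is. length Is = k \<and> distinct Is \<and> partition_on U (set Is)}"

lemma ordered_partition_nth:
  assumes "Is \<in> ordered_partitions U k" "j < k"
  shows "Is ! j \<subseteq> U" "Is ! j \<noteq> {}"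
proof -
  have "Is ! j \<in> set Is"
    using assms by (simp add: ordered_partitions_def)
  moreover have "partition_on U (set Is)"
    using assms(1) by (simp add: ordered_partitions_def)
  ultimately show "Is ! j \<subseteq> U" "Is ! j \<noteq> {}"
    by (auto dest: partition_onD1 partition_onD3)
qed

lemma ordered_partition_nth_disjoint:
  assumes "Is \<in> ordered_partitions U k" "i < k" "j < k" "i \<noteq> j"
  shows "Is ! i \<inter> Is ! j = {}"
proof -
  have "Is ! i \<noteq> Is ! j" "Is ! i \<in> set Is" "Is ! j \<in> set Is"
    using assms by (simp_all add: ordered_partitions_def nth_eq_iff_index_eq)
  moreover have "disjoint (set Is)"
    using assms(1) by (simp add: ordered_partitions_def partition_on_def)
  ultimately show ?thesis
    by (simp add: disjointD)
qed

text \<open>Since the blocks are nonempty, disjointness by index amounts to distinctness of the list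
  plus disjointness of its set of blocks.\<close>

lemma ordered_partitions_iff:
  "Is \<in> ordered_partitions U k \<longleftrightarrow> length Is = k \<and> (\<forall>j<k. Is ! j \<noteq> {}) \<and>
     (\<forall>i<k. \<forall>j<k. i \<noteq> j \<longrightarrow> Is ! i \<inter> Is ! j = {}) \<and> \<Union>(set Is) = U"
proof
  assume Is: "Is \<in> ordered_partitions U k"
  then show "length Is = k \<and> (\<forall>j<k. Is ! j \<noteq> {}) \<and>
      (\<forall>i<k. \<forall>j<k. i \<noteq> j \<longrightarrow> Is ! i \<inter> Is ! j = {}) \<and> \<Union>(set Is) = U"
    using ordered_partition_nth(2)[OF Is] ordered_partition_nth_disjoint[OF Is]
    by (auto simp: ordered_partitions_def partition_on_def)
next
  assume Is: "length Is = k \<and> (\<forall>j<k. Is ! j \<noteq> {}) \<and>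
      (\<forall>i<k. \<forall>j<k. i \<noteq> j \<longrightarrow> Is ! i \<inter> Is ! j = {}) \<and> \<Union>(set Is) = U"
  have "distinct Is"
    unfolding distinct_conv_nth
  proof (intro allI impI)
    fix i j assume "i < length Is" "j < length Is" "i \<noteq> j"
    then show "Is ! i \<noteq> Is ! j"
      using Is by (metis Int_absorb)
  qed
  moreover have "disjoint (set Is)"
  proof (rule disjointI)
    fix A B assume "A \<in> set Is" "B \<in> set Is" "A \<noteq> B"
    then obtain i j where "i < k" "j < k" "A = Is ! i" "B = Is ! j"
      using Is by (auto simp: in_set_conv_nth)
    then show "A \<inter> B = {}"
      using Is \<open>A \<noteq> B\<close> by blast
  qed
  moreover have "{} \<notin> set Is"
    using Is by (auto simp: in_set_conv_nth)
  ultimately show "Is \<in> ordered_partitions U k"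
    using Is by (simp add: ordered_partitions_def partition_on_def)
qed

lemma finite_ordered_partitions:
  assumes "finite U"
  shows "finite (ordered_partitions U k)"
proof (rule finite_subset)
  show "ordered_partitions U k \<subseteq> {Is. set Is \<subseteq> Pow U \<and> length Is = k}"
    by (auto simp: ordered_partitions_def partition_on_def)
  show "finite {Is. set Is \<subseteq> Pow U \<and> length Is = k}"
    using assms by (intro finite_lists_length_eq) simp
qed

lemma ordered_partitions_empty:
  assumes "finite U" "card U < k"
  shows "ordered_partitions U k = {}"
proof (rule ccontr)
  assume "ordered_partitions U k \<noteq> {}"
  then obtain Is where Is: "length Is = k" "distinct Is" "partition_on U (set Is)"
    by (auto simp: ordered_partitions_def)
  have fin: "finite I" "card I \<ge> 1" if "I \<in> set Is" for I
    using that Is(3) assms(1) by (auto simp: partition_on_def Suc_le_eq card_gt_0_iff intro: finite_subset)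
  have "card U = (\<Sum>I\<in>set Is. card I)"
    using Is(3) fin(1) unfolding partition_on_def by (metis card_Union_disjoint)
  also have "\<dots> \<ge> (\<Sum>I\<in>set Is. 1)"
    using fin(2) by (rule sum_mono)
  finally show False
    using Is assms(2) by (simp add: distinct_card)
qed

lemma set_insert_at: "set (insert_at j x xs) = insert x (set xs)"
  by (metis mset_insert_at set_mset_add_mset_insert set_mset_mset)

lemma distinct_insert_at: "distinct (insert_at j x xs) \<longleftrightarrow> x \<notin> set xs \<and> distinct xs"
  using mset_eq_imp_distinct_iff[of "insert_at j x xs" "x # xs"] by (simp add: mset_insert_at)

lemma list_update_eq_insert_at_remove_at: "j < length xs \<Longrightarrow> xs[j := x] = insert_at j x (remove_at j xs)"
  by (simp add: insert_at_def remove_at_def upd_conv_take_nth_drop min_def)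

lemma insert_at_ordered_partitions:
  assumes Is: "Is \<in> ordered_partitions (U - K) m" and j: "j \<le> m" and K: "K \<subseteq> U" "K \<noteq> {}"
  shows "insert_at j K Is \<in> ordered_partitions U (Suc m)"
proof -
  have P: "partition_on (U - K) (set Is)"
    using Is by (simp add: ordered_partitions_def)
  then have "K \<notin> set Is"
    using K(2) by (auto simp: partition_on_def)
  moreover have "partition_on U (insert K (set Is))"
    using P K partition_on_insert[of K "set Is" U] by (auto simp: disjnt_def partition_on_def)
  ultimately show ?thesis
    using Is j by (simp add: ordered_partitions_def set_insert_at distinct_insert_at)
qed

lemma remove_at_ordered_partitions:
  assumes Is: "Is \<in> ordered_partitions U (Suc m)" and j: "j \<le> m"
  shows "remove_at j Is \<in> ordered_partitions (U - Is ! j) m"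
proof -
  let ?R = "remove_at j Is"
  have len: "length Is = Suc m" and P: "partition_on U (set Is)"
    using Is by (simp_all add: ordered_partitions_def)
  have mset: "mset (Is ! j # ?R) = mset Is"
    using mset_remove_at[of j Is] len j by simp
  then have set: "set Is = insert (Is ! j) (set ?R)"
    by (metis list.set(2) set_mset_mset)
  have "distinct (Is ! j # ?R)"
    using mset_eq_imp_distinct_iff[OF mset] Is by (simp add: ordered_partitions_def)
  moreover have "disjnt (Is ! j) (\<Union>(set ?R))"
    using P calculation unfolding set partition_on_def
    by (auto simp: disjnt_def disjoint_def)
  ultimately show ?thesis
    using P len j partition_on_insert[of "Is ! j" "set ?R" U]
    by (simp add: ordered_partitions_def set)
qed

lemma update_Un_ordered_partitions:
  assumes Is: "Is \<in> ordered_partitions (U - K) k" and j: "j < k" and K: "K \<subseteq> U"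
  shows "Is[j := Is ! j \<union> K] \<in> ordered_partitions U k"
proof -
  obtain m where m: "k = Suc m" "j \<le> m"
    using j by (metis less_Suc_eq_le less_imp_Suc_add)
  have "remove_at j Is \<in> ordered_partitions (U - (Is ! j \<union> K)) m"
    using remove_at_ordered_partitions[of Is "U - K" m j] Is m by (simp add: Diff_eq Int_assoc Un_commute)
  moreover have "Is ! j \<union> K \<subseteq> U" "Is ! j \<union> K \<noteq> {}"
    using ordered_partition_nth[OF Is j] K by auto
  ultimately have "insert_at j (Is ! j \<union> K) (remove_at j Is) \<in> ordered_partitions U k"
    using insert_at_ordered_partitions m by metis
  then show ?thesis
    using j Is by (simp add: list_update_eq_insert_at_remove_at ordered_partitions_def)
qed

lemma update_Diff_ordered_partitions:
  assumes Is: "Is \<in> ordered_partitions U k" and j: "j < k" and K: "K \<subseteq> Is ! j" "Is ! j \<noteq> K"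
  shows "Is[j := Is ! j - K] \<in> ordered_partitions (U - K) k"
proof -
  obtain m where m: "k = Suc m" "j \<le> m"
    using j by (metis less_Suc_eq_le less_imp_Suc_add)
  have sub: "Is ! j \<subseteq> U"
    using ordered_partition_nth[OF Is j] by simp
  have "U - K - (Is ! j - K) = U - Is ! j"
    using K(1) by blast
  then have "remove_at j Is \<in> ordered_partitions (U - K - (Is ! j - K)) m"
    using remove_at_ordered_partitions[of Is U m j] Is m by simp
  moreover have "Is ! j - K \<subseteq> U - K" "Is ! j - K \<noteq> {}"
    using sub K by auto
  ultimately have "insert_at j (Is ! j - K) (remove_at j Is) \<in> ordered_partitions (U - K) k"
    using insert_at_ordered_partitions m by metis
  then show ?thesis
    using j Is by (simp add: list_update_eq_insert_at_remove_at ordered_partitions_def)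
qed

definition bounded_tuples :: "int \<Rightarrow> (nat \<Rightarrow> int) \<Rightarrow> nat \<Rightarrow> int list set" where
  "bounded_tuples S lo k = {ds. length ds = k \<and> sum_list ds = S \<and> (\<forall>i<k. lo i \<le> ds ! i)}"

lemma finite_bounded_tuples:
  assumes "\<And>i. L \<le> lo i"
  shows "finite (bounded_tuples S lo k)"
proof (rule finite_subset)
  show "bounded_tuples S lo k \<subseteq> {ds. set ds \<subseteq> {L..S - int k * L + L} \<and> length ds = k}"
  proof safe
    fix ds x assume ds: "ds \<in> bounded_tuples S lo k" and x: "x \<in> set ds"
    have ge: "\<forall>y\<in>set ds. L \<le> y"
      using ds by (auto simp: bounded_tuples_def in_set_conv_nth) (meson assms order_trans)
    have "x - L \<le> sum_list (map (\<lambda>y. y - L) ds)"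
      using x ge by (intro member_le_sum_list) auto
    also have "sum_list (map (\<lambda>y. y - L) ds) = sum_list ds - int (length ds) * L"
      by (induction ds) (auto simp: algebra_simps)
    finally show "x \<in> {L..S - int k * L + L}"
      using x ge ds by (auto simp: bounded_tuples_def)
  qed (simp add: bounded_tuples_def)
  show "finite {ds. set ds \<subseteq> {L..S - int k * L + L} \<and> length ds = k}"
    by (intro finite_lists_length_eq) simp
qed

lemma sum_list_list_update_int:
  assumes "j < length xs"
  shows "sum_list (xs[j := x]) = sum_list xs - xs ! j + (x :: int)"
proof -
  have "sum_list xs = sum_list (take j xs @ xs ! j # drop (Suc j) xs)"
    using id_take_nth_drop[OF assms] by simp
  then show ?thesis
    unfolding upd_conv_take_nth_drop[OF assms] by simp
qed

section \<open>The functional \<open>E\<close> on set functions\<close>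

definition fps_nth_int :: "'a::zero fps \<Rightarrow> int \<Rightarrow> 'a" where
  "fps_nth_int F N = (if N < 0 then 0 else F $ nat N)"

lemma fps_nth_int_add:
  fixes F G :: "'a::monoid_add fps"
  shows "fps_nth_int (F + G) N = fps_nth_int F N + fps_nth_int G N"
  by (simp add: fps_nth_int_def)

lemma fps_nth_int_const_X_power_mult:
  "fps_nth_int (fps_const s * fps_X ^ p * F) N = s * fps_nth_int F (N - int p)"
  by (auto simp: fps_nth_int_def mult.assoc fps_X_power_mult_nth nat_diff_distrib)

definition block_coeff :: "('i, 'a::zero fps) setfun \<Rightarrow> 'i set \<Rightarrow> int \<Rightarrow> 'a" where
  "block_coeff V I d = fps_nth_int (V $$ I) (d + int (card I) - 1)"

text \<open>In \<open>E\<close> the index \<open>d\<close> of a block \<open>I\<close> only matters through \<open>Q_(d + |I| - 1)\<close>, which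
  vanishes for \<open>d < 1 - |I|\<close>; since \<open>|I| \<le> n\<close>, the lower bound \<open>-n\<close> loses no terms and
  makes the range of \<open>d\<close> independent of the partition.\<close>

definition corr_tuples :: "nat \<Rightarrow> nat \<Rightarrow> nat \<Rightarrow> int list set" where
  "corr_tuples g n k = bounded_tuples (int g - 2 + int k) (\<lambda>_. - int n) k"

definition corr_sum ::
    "nat \<Rightarrow> nat \<Rightarrow> (int list \<Rightarrow> real) \<Rightarrow> 'i set \<Rightarrow> ('i, real fps) setfun \<Rightarrow> nat \<Rightarrow> real" where
  "corr_sum g n tau U V k = (\<Sum>Is\<in>ordered_partitions U k. \<Sum>ds\<in>corr_tuples g n k.
     tau ds * (\<Prod>j<k. block_coeff V (Is ! j) (ds ! j)))"

definition E_setfun :: "nat \<Rightarrow> nat \<Rightarrow> (int list \<Rightarrow> real) \<Rightarrow> 'i set \<Rightarrow> ('i, real fps) setfun \<Rightarrow> real" where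
  "E_setfun g n tau U V = (\<Sum>k = 1..n. (-1) ^ k / fact k * corr_sum g n tau U V k)"

lemma finite_corr_tuples: "finite (corr_tuples g n k)"
  unfolding corr_tuples_def by (rule finite_bounded_tuples[of "- int n"]) simp

lemma block_coeff_low: "card I \<le> n \<Longrightarrow> d \<le> - int n \<Longrightarrow> block_coeff V I d = 0"
  by (simp add: block_coeff_def fps_nth_int_def)

lemma block_coeff_empty: "V $$ {} = 1 \<Longrightarrow> block_coeff V {} d = (if d = 1 then 1 else 0)"
  by (simp add: block_coeff_def fps_nth_int_def)

lemma block_coeff_string_factor_mult:
  assumes K: "finite K" "K \<noteq> {}" and I: "finite I"
  shows "block_coeff (string_factor K s * V) I d =
    block_coeff V I d + (if K \<subseteq> I then s * block_coeff V (I - K) (d + 1) else 0)"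
proof (cases "K \<subseteq> I")
  case True
  have "(string_factor K s * V) $$ I = V $$ I + fps_const s * fps_X ^ (card K - 1) * V $$ (I - K)"
    using K I True by (simp add: string_factor_def distrib_right setfun_nth_monom_mult)
  moreover have "d + int (card I) - 1 - int (card K - 1) = d + 1 + int (card (I - K)) - 1"
    using True K card_mono[OF I True] by (simp add: card_Diff_subset Suc_le_eq card_gt_0_iff)
  ultimately show ?thesis
    using True by (simp only: block_coeff_def fps_nth_int_add fps_nth_int_const_X_power_mult if_True)
qed (use K I in \<open>simp add: block_coeff_def string_factor_def distrib_right setfun_nth_monom_mult\<close>)

lemma prod_add_pairwise_annihilating:
  fixes w c :: "'i \<Rightarrow> 'a::comm_ring_1"
  assumes "finite A" "\<And>i j. i \<in> A \<Longrightarrow> j \<in> A \<Longrightarrow> i \<noteq> j \<Longrightarrow> c i * c j = 0"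
  shows "(\<Prod>i\<in>A. w i + c i) = (\<Prod>i\<in>A. w i) + (\<Sum>j\<in>A. c j * (\<Prod>i\<in>A - {j}. w i))"
  using assms
proof (induction A rule: finite_induct)
  case (insert a A)
  have "c a * (\<Sum>j\<in>A. c j * (\<Prod>i\<in>A - {j}. w i)) = 0"
    unfolding sum_distrib_left
  proof (rule sum.neutral, intro ballI)
    fix j assume "j \<in> A"
    then have "c a * c j = 0"
      using insert by (metis insertCI)
    then show "c a * (c j * (\<Prod>i\<in>A - {j}. w i)) = 0"
      by (simp add: mult.assoc[symmetric])
  qed
  moreover have "(\<Sum>j\<in>A. c j * (\<Prod>i\<in>insert a A - {j}. w i)) = w a * (\<Sum>j\<in>A. c j * (\<Prod>i\<in>A - {j}. w i))"
    unfolding sum_distrib_left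
  proof (rule sum.cong[OF refl])
    fix j assume "j \<in> A"
    then have "insert a A - {j} = insert a (A - {j})"
      using insert by auto
    then show "c j * (\<Prod>i\<in>insert a A - {j}. w i) = w a * (c j * (\<Prod>i\<in>A - {j}. w i))"
      using insert by simp
  qed
  ultimately show ?case
    using insert by (simp add: Diff_insert_absorb algebra_simps)
qed simp

definition shifted_corr_sum ::
    "nat \<Rightarrow> nat \<Rightarrow> (int list \<Rightarrow> real) \<Rightarrow> 'i set \<Rightarrow> ('i, real fps) setfun \<Rightarrow> nat \<Rightarrow> real" where
  "shifted_corr_sum g n tau U V m = (\<Sum>j<m. \<Sum>Is\<in>ordered_partitions U m. \<Sum>es\<in>corr_tuples g n m.
     tau es * block_coeff V (Is ! j) (es ! j + 1) * (\<Prod>i\<in>{..<m} - {j}. block_coeff V (Is ! i) (es ! i)))"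

lemma sum_ordered_partitions_absorb:
  assumes U: "finite U" and K: "K \<subseteq> U" and j: "j < k"
  shows "(\<Sum>Is\<in>ordered_partitions U k. if K \<subseteq> Is ! j \<and> Is ! j \<noteq> K then F (Is[j := Is ! j - K]) else 0) =
    (\<Sum>Is\<in>ordered_partitions (U - K) k. F Is)"
proof -
  let ?P = "\<lambda>Is. K \<subseteq> Is ! j \<and> Is ! j \<noteq> K"
  have "(\<Sum>Is\<in>ordered_partitions U k. if ?P Is then F (Is[j := Is ! j - K]) else 0) =
      (\<Sum>Is\<in>{Is \<in> ordered_partitions U k. ?P Is}. F (Is[j := Is ! j - K]))"
    by (rule sum.inter_filter[symmetric, OF finite_ordered_partitions[OF U]])
  also have "\<dots> = (\<Sum>Is\<in>ordered_partitions (U - K) k. F Is)"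
  proof (rule sum.reindex_bij_witness[of _ "\<lambda>Is. Is[j := Is ! j \<union> K]" "\<lambda>Is. Is[j := Is ! j - K]"])
    fix Is assume "Is \<in> {Is \<in> ordered_partitions U k. ?P Is}"
    then show "(Is[j := Is ! j - K])[j := (Is[j := Is ! j - K]) ! j \<union> K] = Is"
      "Is[j := Is ! j - K] \<in> ordered_partitions (U - K) k"
      using j update_Diff_ordered_partitions[of Is U k j K]
      by (auto simp: ordered_partitions_def Un_absorb2 intro!: nth_equalityI)
  next
    fix Is assume Is: "Is \<in> ordered_partitions (U - K) k"
    have ne: "Is ! j \<noteq> {}" and sub: "Is ! j \<subseteq> U - K"
      using ordered_partition_nth[OF Is j] by auto
    have "Is ! j \<union> K - K = Is ! j"
      using sub by auto
    then show "(Is[j := Is ! j \<union> K])[j := (Is[j := Is ! j \<union> K]) ! j - K] = Is"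
      using Is j by (simp add: ordered_partitions_def)
    have "Is ! j \<union> K \<noteq> K"
      using ne sub by auto
    then show "Is[j := Is ! j \<union> K] \<in> {Is \<in> ordered_partitions U k. ?P Is}"
      using Is j update_Un_ordered_partitions[OF Is j K] by (simp add: ordered_partitions_def)
  qed simp
  finally show ?thesis .
qed

lemma sum_sum_mult_sum_swap:
  fixes t :: "'b \<Rightarrow> 'a::semiring_0"
  shows "(\<Sum>x\<in>A. \<Sum>y\<in>B. t y * (\<Sum>j<k. c x y j)) = (\<Sum>j<k. \<Sum>x\<in>A. \<Sum>y\<in>B. t y * c x y j)"
proof -
  have "(\<Sum>x\<in>A. \<Sum>y\<in>B. t y * (\<Sum>j<k. c x y j)) = (\<Sum>x\<in>A. \<Sum>j<k. \<Sum>y\<in>B. t y * c x y j)"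
    by (simp only: sum_distrib_left) (rule sum.cong[OF refl], rule sum.swap)
  also have "\<dots> = (\<Sum>j<k. \<Sum>x\<in>A. \<Sum>y\<in>B. t y * c x y j)"
    by (rule sum.swap)
  finally show ?thesis .
qed

lemma absorbed_block_sum:
  assumes U: "finite U" and K: "K \<subseteq> U"
  shows "(\<Sum>Is\<in>ordered_partitions U k. \<Sum>ds\<in>corr_tuples g n k. tau ds * (\<Sum>j<k.
      (if K \<subseteq> Is ! j \<and> Is ! j \<noteq> K then block_coeff V (Is ! j - K) (ds ! j + 1) else 0) *
      (\<Prod>i\<in>{..<k} - {j}. block_coeff V (Is ! i) (ds ! i)))) = shifted_corr_sum g n tau (U - K) V k"
proof -
  let ?P = "\<lambda>j Is. K \<subseteq> Is ! j \<and> Is ! j \<noteq> K"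
  let ?F = "\<lambda>j Is. \<Sum>ds\<in>corr_tuples g n k. tau ds * block_coeff V (Is ! j) (ds ! j + 1) *
    (\<Prod>i\<in>{..<k} - {j}. block_coeff V (Is ! i) (ds ! i))"
  have "(\<Sum>Is\<in>ordered_partitions U k. \<Sum>ds\<in>corr_tuples g n k. tau ds * (\<Sum>j<k.
      (if ?P j Is then block_coeff V (Is ! j - K) (ds ! j + 1) else 0) *
      (\<Prod>i\<in>{..<k} - {j}. block_coeff V (Is ! i) (ds ! i)))) =
    (\<Sum>j<k. \<Sum>Is\<in>ordered_partitions U k. \<Sum>ds\<in>corr_tuples g n k. tau ds *
      ((if ?P j Is then block_coeff V (Is ! j - K) (ds ! j + 1) else 0) *
      (\<Prod>i\<in>{..<k} - {j}. block_coeff V (Is ! i) (ds ! i))))"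
    by (rule sum_sum_mult_sum_swap)
  also have "\<dots> = (\<Sum>j<k. \<Sum>Is\<in>ordered_partitions U k. if ?P j Is then ?F j (Is[j := Is ! j - K]) else 0)"
  proof (intro sum.cong refl)
    fix j Is assume j: "j \<in> {..<k}" and Is: "Is \<in> ordered_partitions U k"
    show "(\<Sum>ds\<in>corr_tuples g n k. tau ds *
        ((if ?P j Is then block_coeff V (Is ! j - K) (ds ! j + 1) else 0) *
        (\<Prod>i\<in>{..<k} - {j}. block_coeff V (Is ! i) (ds ! i)))) =
      (if ?P j Is then ?F j (Is[j := Is ! j - K]) else 0)"
    proof (cases "?P j Is")
      case True
      have "length Is = k"
        using Is by (simp add: ordered_partitions_def)
      then show ?thesis
        using True j by (auto simp: mult.assoc intro!: sum.cong prod.cong)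
    qed (simp only: if_False mult_zero_left mult_zero_right sum.neutral_const)
  qed
  also have "\<dots> = (\<Sum>j<k. \<Sum>Is\<in>ordered_partitions (U - K) k. ?F j Is)"
  proof (rule sum.cong[OF refl])
    fix j assume "j \<in> {..<k}"
    then show "(\<Sum>Is\<in>ordered_partitions U k. if ?P j Is then ?F j (Is[j := Is ! j - K]) else 0) =
        (\<Sum>Is\<in>ordered_partitions (U - K) k. ?F j Is)"
      using sum_ordered_partitions_absorb[OF U K, of j k "?F j"] by simp
  qed
  finally show ?thesis
    by (simp add: shifted_corr_sum_def)
qed

lemma sum_ordered_partitions_block_eq:
  assumes U: "finite U" and j: "j \<le> m" and K: "K \<subseteq> U" "K \<noteq> {}"
  shows "(\<Sum>Is\<in>ordered_partitions U (Suc m). if Is ! j = K then F Is else 0) =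
    (\<Sum>Is\<in>ordered_partitions (U - K) m. F (insert_at j K Is))"
proof -
  have "(\<Sum>Is\<in>ordered_partitions U (Suc m). if Is ! j = K then F Is else 0) =
      (\<Sum>Is\<in>{Is \<in> ordered_partitions U (Suc m). Is ! j = K}. F Is)"
    by (rule sum.inter_filter[symmetric, OF finite_ordered_partitions[OF U]])
  also have "\<dots> = (\<Sum>Is\<in>ordered_partitions (U - K) m. F (insert_at j K Is))"
  proof (rule sum.reindex_bij_witness[of _ "insert_at j K" "remove_at j"])
    fix Is assume Is: "Is \<in> {Is \<in> ordered_partitions U (Suc m). Is ! j = K}"
    then have "length Is = Suc m"
      by (simp add: ordered_partitions_def)
    then show "insert_at j K (remove_at j Is) = Is" "F (insert_at j K (remove_at j Is)) = F Is"
      using insert_at_remove_at[of j Is] Is j by simp_all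
    show "remove_at j Is \<in> ordered_partitions (U - K) m"
      using remove_at_ordered_partitions[of Is U m j] Is j by simp
  next
    fix Is assume Is: "Is \<in> ordered_partitions (U - K) m"
    then have "length Is = m"
      by (simp add: ordered_partitions_def)
    then show "remove_at j (insert_at j K Is) = Is"
      "insert_at j K Is \<in> {Is \<in> ordered_partitions U (Suc m). Is ! j = K}"
      using remove_at_insert_at[of j Is K] insert_at_ordered_partitions[OF Is j K] j
      by (simp_all add: nth_insert_at)
  qed
  finally show ?thesis .
qed

lemma sum_corr_tuples_entry_eq_0:
  assumes j: "j \<le> m"
  shows "(\<Sum>ds\<in>corr_tuples g n (Suc m). if ds ! j = 0 then G ds else 0) =
    (\<Sum>ds\<in>bounded_tuples (int g - 1 + int m) (\<lambda>_. - int n) m. G (insert_at j 0 ds))"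
proof -
  have "(\<Sum>ds\<in>corr_tuples g n (Suc m). if ds ! j = 0 then G ds else 0) =
      (\<Sum>ds\<in>{ds \<in> corr_tuples g n (Suc m). ds ! j = 0}. G ds)"
    by (rule sum.inter_filter[symmetric, OF finite_corr_tuples])
  also have "\<dots> = (\<Sum>ds\<in>bounded_tuples (int g - 1 + int m) (\<lambda>_. - int n) m. G (insert_at j 0 ds))"
  proof (rule sum.reindex_bij_witness[of _ "insert_at j 0" "remove_at j"])
    fix ds assume ds: "ds \<in> {ds \<in> corr_tuples g n (Suc m). ds ! j = 0}"
    then have len: "length ds = Suc m"
      by (simp add: corr_tuples_def bounded_tuples_def)
    then have ir: "insert_at j 0 (remove_at j ds) = ds"
      using insert_at_remove_at[of j ds] ds j by simp
    then show "insert_at j 0 (remove_at j ds) = ds" "G (insert_at j 0 (remove_at j ds)) = G ds"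
      by simp_all
    have "sum_list (remove_at j ds) = sum_list ds"
      using sum_list_insert_at[of j 0 "remove_at j ds"] ir by simp
    then show "remove_at j ds \<in> bounded_tuples (int g - 1 + int m) (\<lambda>_. - int n) m"
      using ds len j by (simp add: corr_tuples_def bounded_tuples_def nth_remove_at)
  next
    fix ds assume ds: "ds \<in> bounded_tuples (int g - 1 + int m) (\<lambda>_. - int n) m"
    then have "length ds = m"
      by (simp add: bounded_tuples_def)
    then show "remove_at j (insert_at j 0 ds) = ds"
      "insert_at j 0 ds \<in> {ds \<in> corr_tuples g n (Suc m). ds ! j = 0}"
      using ds j remove_at_insert_at
      by (auto simp: corr_tuples_def bounded_tuples_def nth_insert_at sum_list_insert_at)
  qed
  finally show ?thesis .
qed

lemma sum_bounded_tuples_decrement: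
  assumes j: "j < m"
  shows "(\<Sum>ds\<in>bounded_tuples (S + 1) lo m. f (ds[j := ds ! j - 1])) =
    (\<Sum>es\<in>bounded_tuples S (lo(j := lo j - 1)) m. f es)"
proof (rule sum.reindex_bij_witness[of _ "\<lambda>es. es[j := es ! j + 1]" "\<lambda>ds. ds[j := ds ! j - 1]"])
  fix ds assume ds: "ds \<in> bounded_tuples (S + 1) lo m"
  then have len: "length ds = m"
    by (simp add: bounded_tuples_def)
  then show "(ds[j := ds ! j - 1])[j := (ds[j := ds ! j - 1]) ! j + 1] = ds"
    using j by simp
  have "(lo(j := lo j - 1)) i \<le> ds[j := ds ! j - 1] ! i" if "i < m" for i
    using ds that len j by (cases "i = j") (auto simp: bounded_tuples_def)
  then show "ds[j := ds ! j - 1] \<in> bounded_tuples S (lo(j := lo j - 1)) m"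
    using ds len j by (simp add: bounded_tuples_def sum_list_list_update_int)
next
  fix es assume es: "es \<in> bounded_tuples S (lo(j := lo j - 1)) m"
  then have len: "length es = m"
    by (simp add: bounded_tuples_def)
  then show "(es[j := es ! j + 1])[j := (es[j := es ! j + 1]) ! j - 1] = es"
    using j by simp
  have "lo i \<le> es[j := es ! j + 1] ! i" if "i < m" for i
    using es that len unfolding bounded_tuples_def by (cases "i = j") (auto dest!: spec[of _ i])
  then show "es[j := es ! j + 1] \<in> bounded_tuples (S + 1) lo m"
    using es len j by (simp add: bounded_tuples_def sum_list_list_update_int)
qed simp_all

lemma sum_string_shift:
  fixes tau :: "int list \<Rightarrow> real" and V :: "('i, real fps) setfun"
  assumes j: "j < m" and Is: "Is \<in> ordered_partitions U m" and U: "finite U" "card U \<le> n"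
  shows "(\<Sum>ds\<in>bounded_tuples (int g - 1 + int m) (\<lambda>_. - int n) m.
      tau (ds[j := ds ! j - 1]) * (\<Prod>i<m. block_coeff V (Is ! i) (ds ! i))) =
    (\<Sum>es\<in>corr_tuples g n m. tau es * block_coeff V (Is ! j) (es ! j + 1) *
      (\<Prod>i\<in>{..<m} - {j}. block_coeff V (Is ! i) (es ! i)))"
proof -
  let ?lo = "(\<lambda>_. - int n)(j := - int n - 1)"
  let ?f = "\<lambda>es. tau es * block_coeff V (Is ! j) (es ! j + 1) * (\<Prod>i\<in>{..<m} - {j}. block_coeff V (Is ! i) (es ! i))"
  have "(\<Prod>i<m. block_coeff V (Is ! i) (ds ! i)) =
      block_coeff V (Is ! j) (ds ! j) * (\<Prod>i\<in>{..<m} - {j}. block_coeff V (Is ! i) (ds ! i))" if "length ds = m" for ds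
    using j by (simp add: prod.remove[of "{..<m}" j])
  then have "(\<Sum>ds\<in>bounded_tuples (int g - 1 + int m) (\<lambda>_. - int n) m.
      tau (ds[j := ds ! j - 1]) * (\<Prod>i<m. block_coeff V (Is ! i) (ds ! i))) =
    (\<Sum>ds\<in>bounded_tuples (int g - 2 + int m + 1) (\<lambda>_. - int n) m. ?f (ds[j := ds ! j - 1]))"
    using j by (intro sum.cong) (auto simp: bounded_tuples_def mult.assoc)
  also have "\<dots> = (\<Sum>es\<in>bounded_tuples (int g - 2 + int m) ?lo m. ?f es)"
    using sum_bounded_tuples_decrement[OF j, of ?f "int g - 2 + int m" "\<lambda>_. - int n"] by simp
  also have "\<dots> = (\<Sum>es\<in>corr_tuples g n m. ?f es)"
  proof (rule sum.mono_neutral_right)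
    show "finite (bounded_tuples (int g - 2 + int m) ?lo m)"
      by (rule finite_bounded_tuples[of "- int n - 1"]) simp
    show "corr_tuples g n m \<subseteq> bounded_tuples (int g - 2 + int m) ?lo m"
      by (auto simp: corr_tuples_def bounded_tuples_def)
    have "card (Is ! j) \<le> n"
      using card_mono[OF U(1) ordered_partition_nth(1)[OF Is j]] U(2) by simp
    show "\<forall>es\<in>bounded_tuples (int g - 2 + int m) ?lo m - corr_tuples g n m. ?f es = 0"
    proof
      fix es assume es: "es \<in> bounded_tuples (int g - 2 + int m) ?lo m - corr_tuples g n m"
      then obtain i where i: "i < m" "es ! i < - int n" "?lo i \<le> es ! i"
        by (auto simp: corr_tuples_def bounded_tuples_def not_le)
      then have "i = j"
        by (cases "i = j") simp_all
      then have "block_coeff V (Is ! j) (es ! j + 1) = 0"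
        using i \<open>card (Is ! j) \<le> n\<close> by (simp add: block_coeff_low)
      then show "?f es = 0"
        by simp
    qed
  qed
  finally show ?thesis .
qed

lemma sum_append_0_eq_shifted_corr_sum:
  fixes V :: "('i, real fps) setfun"
  assumes ss: "string_system g tau" and U: "finite U" "card U \<le> n" and m: "1 \<le> m"
  shows "(\<Sum>Is\<in>ordered_partitions U m. \<Sum>ds\<in>bounded_tuples (int g - 1 + int m) (\<lambda>_. - int n) m.
      tau (ds @ [0]) * (\<Prod>i<m. block_coeff V (Is ! i) (ds ! i))) = shifted_corr_sum g n tau U V m"
proof -
  let ?T = "bounded_tuples (int g - 1 + int m) (\<lambda>_. - int n) m"
  have "tau (ds @ [0]) = (\<Sum>j<m. tau (ds[j := ds ! j - 1]))" if "ds \<in> ?T" for ds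
    using ss that m unfolding string_system_def bounded_tuples_def by auto
  then have "(\<Sum>Is\<in>ordered_partitions U m. \<Sum>ds\<in>?T. tau (ds @ [0]) * (\<Prod>i<m. block_coeff V (Is ! i) (ds ! i))) =
      (\<Sum>Is\<in>ordered_partitions U m. \<Sum>j<m. \<Sum>ds\<in>?T.
        tau (ds[j := ds ! j - 1]) * (\<Prod>i<m. block_coeff V (Is ! i) (ds ! i)))"
    by (simp add: sum_distrib_right sum.swap[of _ "{..<m}"])
  also have "\<dots> = (\<Sum>Is\<in>ordered_partitions U m. \<Sum>j<m. \<Sum>es\<in>corr_tuples g n m.
      tau es * block_coeff V (Is ! j) (es ! j + 1) * (\<Prod>i\<in>{..<m} - {j}. block_coeff V (Is ! i) (es ! i)))"
    using U by (intro sum.cong refl sum_string_shift) auto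
  finally show ?thesis
    by (simp add: shifted_corr_sum_def sum.swap[of _ "ordered_partitions U m"])
qed

lemma sum_block_eq_entry_eq_0:
  fixes V :: "('i, real fps) setfun"
  assumes U: "finite U" and j: "j \<le> m" and K: "K \<subseteq> U" "K \<noteq> {}" and ss: "string_system g tau"
  shows "(\<Sum>Is\<in>ordered_partitions U (Suc m). if Is ! j = K then (\<Sum>ds\<in>corr_tuples g n (Suc m).
      if ds ! j = 0 then tau ds * (\<Prod>i\<in>{..<Suc m} - {j}. block_coeff V (Is ! i) (ds ! i)) else 0) else 0) =
    (\<Sum>Is\<in>ordered_partitions (U - K) m. \<Sum>ds\<in>bounded_tuples (int g - 1 + int m) (\<lambda>_. - int n) m.
      tau (ds @ [0]) * (\<Prod>i<m. block_coeff V (Is ! i) (ds ! i)))"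
proof -
  let ?T = "bounded_tuples (int g - 1 + int m) (\<lambda>_. - int n) m"
  have "tau (insert_at j 0 ds) * (\<Prod>i\<in>{..<Suc m} - {j}.
      block_coeff V (insert_at j K Is ! i) (insert_at j 0 ds ! i)) =
      tau (ds @ [0]) * (\<Prod>i<m. block_coeff V (Is ! i) (ds ! i))"
    if Is: "Is \<in> ordered_partitions (U - K) m" and ds: "ds \<in> ?T" for Is ds
  proof -
    have len: "length Is = m" "length ds = m"
      using Is ds by (simp_all add: ordered_partitions_def bounded_tuples_def)
    have "corr_dom g (insert_at j 0 ds)"
      using ds len j by (simp add: corr_dom_def bounded_tuples_def sum_list_insert_at)
    moreover have "mset (insert_at j 0 ds) = mset (ds @ [0])"
      by (simp add: mset_insert_at)
    ultimately have "tau (insert_at j 0 ds) = tau (ds @ [0])"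
      using ss unfolding string_system_def by blast
    then show ?thesis
      using prod_insert_at_reindex[OF j len, of "block_coeff V" K 0] by simp
  qed
  then show ?thesis
    by (simp add: sum_ordered_partitions_block_eq[OF U j K] sum_corr_tuples_entry_eq_0[OF j])
qed

lemma string_block_sum:
  fixes V :: "('i, real fps) setfun"
  assumes U: "finite U" "card U \<le> n" and K: "K \<subseteq> U" "K \<noteq> {}"
    and ss: "string_system g tau" and g: "2 \<le> g" and k: "1 \<le> k"
  shows "(\<Sum>Is\<in>ordered_partitions U k. \<Sum>ds\<in>corr_tuples g n k. tau ds * (\<Sum>j<k.
      (if Is ! j = K \<and> ds ! j = 0 then 1 else 0) * (\<Prod>i\<in>{..<k} - {j}. block_coeff V (Is ! i) (ds ! i)))) =
    real k * shifted_corr_sum g n tau (U - K) V (k - 1)"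
proof (cases "k = 1")
  case True
  have "ds ! 0 \<noteq> 0" if "ds \<in> corr_tuples g n 1" for ds
    using that g by (auto simp: corr_tuples_def bounded_tuples_def length_Suc_conv)
  then show ?thesis
    using True by (simp add: shifted_corr_sum_def)
next
  case False
  define m where "m = k - 1"
  have m: "k = Suc m" "1 \<le> m"
    using k False by (simp_all add: m_def)
  let ?T = "bounded_tuples (int g - 1 + int m) (\<lambda>_. - int n) m"
  have "(\<Sum>Is\<in>ordered_partitions U k. \<Sum>ds\<in>corr_tuples g n k. tau ds * (\<Sum>j<k.
      (if Is ! j = K \<and> ds ! j = 0 then 1 else 0) * (\<Prod>i\<in>{..<k} - {j}. block_coeff V (Is ! i) (ds ! i)))) =
    (\<Sum>j<k. \<Sum>Is\<in>ordered_partitions U k. \<Sum>ds\<in>corr_tuples g n k. tau ds *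
      ((if Is ! j = K \<and> ds ! j = 0 then 1 else 0) * (\<Prod>i\<in>{..<k} - {j}. block_coeff V (Is ! i) (ds ! i))))"
    by (rule sum_sum_mult_sum_swap)
  also have "\<dots> = (\<Sum>j<k. \<Sum>Is\<in>ordered_partitions U (Suc m). if Is ! j = K then
      (\<Sum>ds\<in>corr_tuples g n (Suc m). if ds ! j = 0 then
        tau ds * (\<Prod>i\<in>{..<Suc m} - {j}. block_coeff V (Is ! i) (ds ! i)) else 0) else 0)"
    unfolding m(1) by (intro sum.cong refl) (auto intro!: sum.cong)
  also have "\<dots> = (\<Sum>j<k. \<Sum>Is\<in>ordered_partitions (U - K) m. \<Sum>ds\<in>?T.
      tau (ds @ [0]) * (\<Prod>i<m. block_coeff V (Is ! i) (ds ! i)))"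
    using U K ss m by (intro sum.cong refl sum_block_eq_entry_eq_0) auto
  also have "\<dots> = real k * shifted_corr_sum g n tau (U - K) V m"
    using U K m ss card_mono[OF U(1), of "U - K"]
    by (simp add: sum_append_0_eq_shifted_corr_sum)
  finally show ?thesis
    using m by simp
qed

lemma sum_alternating_telescope:
  fixes S :: "nat \<Rightarrow> real"
  shows "(\<Sum>k = 1..N. (-1) ^ k / fact k * (S k + real k * S (k - 1))) = (-1) ^ N / fact N * S N - S 0"
proof (induction N)
  case (Suc N)
  have "(-1) ^ Suc N / fact (Suc N) * (real (Suc N) * S N) = - ((-1) ^ N / fact N * S N)"
    by (simp add: field_simps del: of_nat_Suc)
  then show ?case
    using Suc.IH by (simp add: distrib_left)
qed simp

lemma prod_block_coeff_string_factor_mult: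
  fixes V :: "('i, real fps) setfun"
  assumes Is: "Is \<in> ordered_partitions U k" and U: "finite U" and K: "finite K" "K \<noteq> {}"
    and V0: "V $$ {} = 1"
  shows "(\<Prod>j<k. block_coeff (string_factor K s * V) (Is ! j) (ds ! j)) = (\<Prod>j<k. block_coeff V (Is ! j) (ds ! j)) +
    s * ((\<Sum>j<k. (if K \<subseteq> Is ! j \<and> Is ! j \<noteq> K then block_coeff V (Is ! j - K) (ds ! j + 1) else 0) *
          (\<Prod>i\<in>{..<k} - {j}. block_coeff V (Is ! i) (ds ! i))) +
      (\<Sum>j<k. (if Is ! j = K \<and> ds ! j = 0 then 1 else 0) * (\<Prod>i\<in>{..<k} - {j}. block_coeff V (Is ! i) (ds ! i))))"
proof -
  let ?W = "block_coeff V"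
  define c where "c j = (if K \<subseteq> Is ! j \<and> Is ! j \<noteq> K then ?W (Is ! j - K) (ds ! j + 1) else 0) +
    (if Is ! j = K \<and> ds ! j = 0 then 1 else 0)" for j
  have "block_coeff (string_factor K s * V) (Is ! j) (ds ! j) = ?W (Is ! j) (ds ! j) + s * c j" if "j < k" for j
  proof -
    have "finite (Is ! j)"
      using ordered_partition_nth(1)[OF Is that] U by (rule finite_subset)
    then show ?thesis
      using K V0 by (cases "Is ! j = K") (simp_all add: block_coeff_string_factor_mult c_def block_coeff_empty)
  qed
  then have "(\<Prod>j<k. block_coeff (string_factor K s * V) (Is ! j) (ds ! j)) = (\<Prod>j<k. ?W (Is ! j) (ds ! j) + s * c j)"
    by (intro prod.cong) auto
  also have "\<dots> = (\<Prod>j<k. ?W (Is ! j) (ds ! j)) + (\<Sum>j<k. s * c j * (\<Prod>i\<in>{..<k} - {j}. ?W (Is ! i) (ds ! i)))"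
  proof (rule prod_add_pairwise_annihilating)
    fix i j assume "i \<in> {..<k}" "j \<in> {..<k}" "i \<noteq> j"
    then have "\<not> (K \<subseteq> Is ! i \<and> K \<subseteq> Is ! j)"
      using ordered_partition_nth_disjoint[OF Is] K(2) by blast
    then show "s * c i * (s * c j) = 0"
      by (auto simp: c_def)
  qed simp
  finally show ?thesis
    by (simp only: c_def distrib_left distrib_right sum.distrib sum_distrib_left mult.assoc)
qed

text \<open>A string factor changes the \<open>k\<close>-block sum by \<open>s (S_k + k S_(k-1))\<close>: a block strictly
  containing \<open>K\<close> loses \<open>K\<close> and raises its \<open>d\<close>, while a block equal to \<open>K\<close> is removed with
  \<open>d = 0\<close>, which the string equation turns into \<open>S_(k-1)\<close>. These changes telescope in \<open>E\<close>.\<close>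

lemma corr_sum_string_factor_mult:
  fixes V :: "('i, real fps) setfun"
  assumes U: "finite U" "card U \<le> n" and K: "K \<subseteq> U" "K \<noteq> {}"
    and ss: "string_system g tau" and g: "2 \<le> g" and V0: "V $$ {} = 1" and k: "1 \<le> k"
  shows "corr_sum g n tau U (string_factor K s * V) k = corr_sum g n tau U V k +
    s * (shifted_corr_sum g n tau (U - K) V k + real k * shifted_corr_sum g n tau (U - K) V (k - 1))"
proof -
  let ?W = "block_coeff V"
  let ?A = "\<lambda>Is ds. tau ds * (\<Sum>j<k. (if K \<subseteq> Is ! j \<and> Is ! j \<noteq> K then ?W (Is ! j - K) (ds ! j + 1) else 0) *
    (\<Prod>i\<in>{..<k} - {j}. ?W (Is ! i) (ds ! i)))"
  let ?B = "\<lambda>Is ds. tau ds * (\<Sum>j<k. (if Is ! j = K \<and> ds ! j = 0 then 1 else 0) *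
    (\<Prod>i\<in>{..<k} - {j}. ?W (Is ! i) (ds ! i)))"
  have fK: "finite K"
    using K(1) U(1) by (rule finite_subset)
  have "corr_sum g n tau U (string_factor K s * V) k = (\<Sum>Is\<in>ordered_partitions U k. \<Sum>ds\<in>corr_tuples g n k.
      tau ds * (\<Prod>j<k. ?W (Is ! j) (ds ! j)) + s * (?A Is ds + ?B Is ds))"
    unfolding corr_sum_def
  proof (intro sum.cong refl)
    fix Is ds assume "Is \<in> ordered_partitions U k"
    from prod_block_coeff_string_factor_mult[OF this U(1) fK K(2) V0, of s ds]
    show "tau ds * (\<Prod>j<k. block_coeff (string_factor K s * V) (Is ! j) (ds ! j)) =
        tau ds * (\<Prod>j<k. ?W (Is ! j) (ds ! j)) + s * (?A Is ds + ?B Is ds)"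
      by (simp add: distrib_left mult.left_commute)
  qed
  also have "\<dots> = corr_sum g n tau U V k + s * ((\<Sum>Is\<in>ordered_partitions U k. \<Sum>ds\<in>corr_tuples g n k. ?A Is ds) +
      (\<Sum>Is\<in>ordered_partitions U k. \<Sum>ds\<in>corr_tuples g n k. ?B Is ds))"
    unfolding corr_sum_def by (simp only: sum.distrib flip: sum_distrib_left)
  also have "\<dots> = corr_sum g n tau U V k +
      s * (shifted_corr_sum g n tau (U - K) V k + real k * shifted_corr_sum g n tau (U - K) V (k - 1))"
    by (simp only: absorbed_block_sum[OF U(1) K(1)] string_block_sum[OF U K ss g k])
  finally show ?thesis .
qed

lemma E_setfun_string_factor_mult:
  fixes V :: "('i, real fps) setfun"
  assumes U: "finite U" "card U \<le> n" and K: "K \<subseteq> U" "K \<noteq> {}"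
    and ss: "string_system g tau" and g: "2 \<le> g" and V0: "V $$ {} = 1"
  shows "E_setfun g n tau U (string_factor K s * V) = E_setfun g n tau U V"
proof -
  let ?S = "shifted_corr_sum g n tau (U - K) V"
  have "E_setfun g n tau U (string_factor K s * V) = (\<Sum>k = 1..n. (-1) ^ k / fact k *
      (corr_sum g n tau U V k + s * (?S k + real k * ?S (k - 1))))"
    unfolding E_setfun_def by (intro sum.cong refl) (simp add: corr_sum_string_factor_mult[OF U K ss g V0])
  also have "\<dots> = E_setfun g n tau U V + s * (\<Sum>k = 1..n. (-1) ^ k / fact k * (?S k + real k * ?S (k - 1)))"
    unfolding E_setfun_def by (simp only: distrib_left sum.distrib mult.left_commute[of _ s] flip: sum_distrib_left)
  also have "(\<Sum>k = 1..n. (-1) ^ k / fact k * (?S k + real k * ?S (k - 1))) = (-1) ^ n / fact n * ?S n - ?S 0"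
    by (rule sum_alternating_telescope)
  also have "?S n = 0"
  proof -
    have "finite K"
      using K(1) U(1) by (rule finite_subset)
    then have "card K \<ge> 1"
      using K(2) by (simp add: Suc_le_eq card_gt_0_iff)
    then have "card (U - K) < n"
      using U card_mono[OF U(1) K(1)] card_Diff_subset[OF \<open>finite K\<close> K(1)] by simp
    then show ?thesis
      using U(1) by (simp add: shifted_corr_sum_def ordered_partitions_empty)
  qed
  finally show ?thesis
    by (simp add: shifted_corr_sum_def)
qed

lemma E_setfun_agree_on:
  assumes "agree_on U V V'"
  shows "E_setfun g n tau U V = E_setfun g n tau U V'"
proof -
  have "block_coeff V (Is ! j) d = block_coeff V' (Is ! j) d" if "Is \<in> ordered_partitions U k" "j < k" for Is k j d
    using assms ordered_partition_nth(1)[OF that] by (simp add: agree_on_def block_coeff_def)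
  then show ?thesis
    unfolding E_setfun_def corr_sum_def
    by (intro sum.cong refl arg_cong2[where f = "(*)"] prod.cong) auto
qed

lemma setfun_nth_string_factors_mult_empty:
  "nonempty_blocks L \<Longrightarrow> (string_factors L * V) $$ {} = V $$ {}"
proof (induction L)
  case (Cons p L)
  obtain K s where p: "p = (K, s)"
    by (cases p)
  then have "finite K" "K \<noteq> {}" "nonempty_blocks L"
    using Cons.prems by (auto simp: nonempty_blocks_def)
  then have "(string_factor K s * (string_factors L * V)) $$ {} = V $$ {}"
    using Cons.IH by (simp add: string_factor_def distrib_right setfun_nth_monom_mult)
  then show ?case
    using p by (simp add: string_factors_def mult.assoc)
qed (simp add: string_factors_def)

lemma E_setfun_string_factors_mult:
  fixes V :: "('i, real fps) setfun"
  assumes U: "finite U" "card U \<le> n" and ss: "string_system g tau" and g: "2 \<le> g"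
    and L: "nonempty_blocks L" and V0: "V $$ {} = 1"
  shows "E_setfun g n tau U (string_factors L * V) = E_setfun g n tau U V"
  using L V0
proof (induction L arbitrary: V)
  case (Cons p L)
  obtain K s where p: "p = (K, s)"
    by (cases p)
  have K: "finite K" "K \<noteq> {}" and L: "nonempty_blocks L"
    using Cons.prems p by (auto simp: nonempty_blocks_def)
  have V1: "(string_factors L * V) $$ {} = 1"
    using setfun_nth_string_factors_mult_empty[OF L] Cons.prems(2) by simp
  have "E_setfun g n tau U (string_factor K s * (string_factors L * V)) = E_setfun g n tau U (string_factors L * V)"
  proof (cases "K \<subseteq> U")
    case True
    show ?thesis
      by (rule E_setfun_string_factor_mult[OF U True K(2) ss g V1])
  next
    case False
    have "agree_on U (string_factor K s * (string_factors L * V)) (string_factors L * V)"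
      unfolding agree_on_def
    proof (intro allI impI)
      fix J assume "J \<subseteq> U"
      then have "finite J" "\<not> K \<subseteq> J"
        using U(1) False by (auto intro: finite_subset)
      then show "(string_factor K s * (string_factors L * V)) $$ J = (string_factors L * V) $$ J"
        using K by (simp add: string_factor_def distrib_right setfun_nth_monom_mult)
    qed
    then show ?thesis
      by (rule E_setfun_agree_on)
  qed
  then show ?case
    using Cons.IH[OF L Cons.prems(2)] p by (simp add: string_factors_def mult.assoc)
qed (simp add: string_factors_def)

lemma string_factors_neg_mult:
  assumes "nonempty_blocks L"
  shows "string_factors (map (\<lambda>(K, s). (K, - s)) L) * string_factors L = (1 :: ('i, 'a::comm_ring_1 fps) setfun)"
  using assms
proof (induction L)
  case (Cons p L)
  obtain K s where p: "p = (K, s :: 'a)"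
    by (cases p)
  let ?x = "setfun_monom K (fps_const s * fps_X ^ (card K - 1))"
  have K: "K \<noteq> {}" and L: "nonempty_blocks L"
    using Cons.prems p by (auto simp: nonempty_blocks_def)
  have "fps_const (- s) * fps_X ^ (card K - 1) = - (fps_const s * fps_X ^ (card K - 1))"
    by (simp add: fps_const_neg[symmetric] del: fps_const_neg)
  then have "string_factor K (- s) = 1 - ?x"
    by (simp add: string_factor_def setfun_monom_uminus)
  moreover have "(1 - y) * (1 + y) = 1 - y * y" for y :: "('i, 'a fps) setfun"
    by (simp add: algebra_simps)
  ultimately have "string_factor K (- s) * string_factor K s = 1 - ?x * ?x"
    by (simp only: string_factor_def[of K s])
  then have "string_factor K (- s) * string_factor K s = 1"
    using setfun_monom_square_eq_0[OF K] by simp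
  moreover have "string_factors (map (\<lambda>(K, s). (K, - s)) (p # L)) * string_factors (p # L) =
      (string_factor K (- s) * string_factor K s) *
      (string_factors (map (\<lambda>(K, s). (K, - s)) L) * string_factors L)"
    using p by (simp add: string_factors_def algebra_simps)
  ultimately show ?case
    using Cons.IH[OF L] by simp
qed (simp add: string_factors_def)

lemma E_setfun_ord_ge_card_on_eq_0:
  assumes R: "ord_ge_card_on {1..n} R" and t: "\<exists>d\<in>set t. d < 0"
    and init: "\<And>ds. initial_tuple g ds \<Longrightarrow> tau ds = (if mset ds = mset t then 1 else 0)"
  shows "E_setfun g n tau {1..n} R = 0"
proof -
  have "tau ds * (\<Prod>j<k. block_coeff R (Is ! j) (ds ! j)) = 0"
    if k: "k \<in> {1..n}" and Is: "Is \<in> ordered_partitions {1..n} k" and ds: "ds \<in> corr_tuples g n k"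
    for k Is ds
  proof (cases "\<exists>j<k. ds ! j \<le> 0")
    case True
    then obtain j where j: "j < k" "ds ! j \<le> 0"
      by blast
    have "fps_ord_ge (card (Is ! j)) (R $$ (Is ! j))"
      using R ordered_partition_nth(1)[OF Is j(1)] by (simp add: ord_ge_card_on_def)
    then have "block_coeff R (Is ! j) (ds ! j) = 0"
      using j(2) by (simp add: block_coeff_def fps_nth_int_def fps_ord_ge_def)
    then have "(\<Prod>j<k. block_coeff R (Is ! j) (ds ! j)) = 0"
      using j(1) by (meson finite_lessThan lessThan_iff prod_zero)
    then show ?thesis
      by simp
  next
    case False
    have len: "length ds = k"
      using ds by (simp add: corr_tuples_def bounded_tuples_def)
    then have pos: "\<forall>d\<in>set ds. 0 < d"
      using False by (auto simp: in_set_conv_nth not_le)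
    then have "initial_tuple g ds"
      using ds len k by (auto simp: initial_tuple_def corr_dom_def corr_tuples_def bounded_tuples_def)
    moreover have "mset ds \<noteq> mset t"
      using t pos by (metis not_less_iff_gr_or_eq set_mset_mset)
    ultimately show ?thesis
      using init by simp
  qed
  then show ?thesis
    unfolding E_setfun_def corr_sum_def by (intro sum.neutral ballI) (simp add: sum.neutral)
qed

lemma block_coeff_subset_prod_moebius_factor_q_fps:
  "finite I \<Longrightarrow> block_coeff (subset_prod (moebius_factor a q_fps)) I d = Qpol (d + int (card I) - 1) (\<Sum>l\<in>I. a l)"
  by (simp add: block_coeff_def fps_nth_int_def setfun_nth_subset_prod_moebius_factor_q_fps q_fps_def Qpol_def)

lemma ordered_set_partitions_eq: "ordered_set_partitions n k = ordered_partitions {1..n} k"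
  unfolding ordered_set_partitions_def by (rule set_eqI) (simp only: mem_Collect_eq ordered_partitions_iff)

lemma sum_d_range_eq_sum_corr_tuples:
  assumes Is: "Is \<in> ordered_partitions {1..n} k"
  shows "(\<Sum>ds\<in>d_range g Is. tau ds * (\<Prod>j<k. Qpol (ds ! j + int (card (Is ! j)) - 1) (\<Sum>l\<in>Is ! j. a l))) =
    (\<Sum>ds\<in>corr_tuples g n k. tau ds * (\<Prod>j<k. Qpol (ds ! j + int (card (Is ! j)) - 1) (\<Sum>l\<in>Is ! j. a l)))"
proof (rule sum.mono_neutral_left[OF finite_corr_tuples])
  have len: "length Is = k"
    using Is by (simp add: ordered_partitions_def)
  have card: "card (Is ! j) \<le> n" if "j < k" for j
    using card_mono[OF _ ordered_partition_nth(1)[OF Is that]] by simp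
  show "d_range g Is \<subseteq> corr_tuples g n k"
  proof
    fix ds assume ds: "ds \<in> d_range g Is"
    have "- int n \<le> ds ! j" if "j < k" for j
      using ds that len card[OF that] by (auto simp: d_range_def)
    then show "ds \<in> corr_tuples g n k"
      using ds len by (simp add: d_range_def corr_tuples_def bounded_tuples_def)
  qed
  show "\<forall>ds\<in>corr_tuples g n k - d_range g Is.
      tau ds * (\<Prod>j<k. Qpol (ds ! j + int (card (Is ! j)) - 1) (\<Sum>l\<in>Is ! j. a l)) = 0"
  proof
    fix ds assume "ds \<in> corr_tuples g n k - d_range g Is"
    then obtain j where j: "j < k" "ds ! j + int (card (Is ! j)) - 1 < 0"
      using len by (auto simp: d_range_def corr_tuples_def bounded_tuples_def not_le)
    then have "Qpol (ds ! j + int (card (Is ! j)) - 1) (\<Sum>l\<in>Is ! j. a l) = 0"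
      by (simp add: Qpol_def)
    then have "(\<Prod>j<k. Qpol (ds ! j + int (card (Is ! j)) - 1) (\<Sum>l\<in>Is ! j. a l)) = 0"
      using j(1) by (meson finite_lessThan lessThan_iff prod_zero)
    then show "tau ds * (\<Prod>j<k. Qpol (ds ! j + int (card (Is ! j)) - 1) (\<Sum>l\<in>Is ! j. a l)) = 0"
      by simp
  qed
qed

lemma E_gn_eq_E_setfun: "E_gn g n tau a = E_setfun g n tau {1..n} (subset_prod (moebius_factor a q_fps))"
  unfolding E_gn_def E_setfun_def corr_sum_def ordered_set_partitions_eq
proof (rule sum.cong[OF refl])
  fix k
  have "(\<Sum>ds\<in>d_range g Is. tau ds * (\<Prod>j<k. Qpol (ds ! j + int (card (Is ! j)) - 1) (\<Sum>l\<in>Is ! j. a l))) =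
      (\<Sum>ds\<in>corr_tuples g n k. tau ds * (\<Prod>j<k. block_coeff (subset_prod (moebius_factor a q_fps)) (Is ! j) (ds ! j)))"
    if Is: "Is \<in> ordered_partitions {1..n} k" for Is
  proof -
    have "block_coeff (subset_prod (moebius_factor a q_fps)) (Is ! j) d =
        Qpol (d + int (card (Is ! j)) - 1) (\<Sum>l\<in>Is ! j. a l)" if "j < k" for j d
      using ordered_partition_nth(1)[OF Is that]
      by (intro block_coeff_subset_prod_moebius_factor_q_fps) (auto intro: finite_subset)
    then show ?thesis
      using sum_d_range_eq_sum_corr_tuples[OF Is] by simp
  qed
  then show "(-1) ^ k / fact k * (\<Sum>Is\<in>ordered_partitions {1..n} k. \<Sum>ds\<in>d_range g Is.
      tau ds * (\<Prod>j<k. Qpol (ds ! j + int (card (Is ! j)) - 1) (\<Sum>l\<in>Is ! j. a l))) =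
    (-1) ^ k / fact k * (\<Sum>Is\<in>ordered_partitions {1..n} k. \<Sum>ds\<in>corr_tuples g n k.
      tau ds * (\<Prod>j<k. block_coeff (subset_prod (moebius_factor a q_fps)) (Is ! j) (ds ! j)))"
    by simp
qed

theorem proposition4p5:
  fixes g n :: nat and t :: "int list" and tau :: "int list \<Rightarrow> real"
  assumes "g \<ge> 2" and "n \<ge> 2"
    and "initial_tuple g t" and "\<exists>d\<in>set t. d < 0"
    and "string_system g tau"
    and "\<And>ds. initial_tuple g ds \<Longrightarrow> tau ds = (if mset ds = mset t then 1 else 0)"
  shows "\<forall>a :: nat \<Rightarrow> real. E_gn g n tau a = 0"
proof
  fix a :: "nat \<Rightarrow> real"
  let ?U = "{1..n}" and ?V = "subset_prod (moebius_factor a q_fps)"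
  have h: "admissible (moebius_factor a q_fps)"
    by (rule admissible_moebius_factor_q_fps)
  obtain L R where L: "nonempty_blocks L" and R: "ord_ge_card_on ?U R"
    and VLR: "agree_on ?U ?V (string_factors L * R)"
    using factorizable_on_subset_prod[OF h] unfolding factorizable_on_def by blast
  let ?L' = "map (\<lambda>(K, s). (K, - s)) L"
  have L': "nonempty_blocks ?L'"
    using L by (auto simp: nonempty_blocks_def)
  have "E_gn g n tau a = E_setfun g n tau ?U ?V"
    by (rule E_gn_eq_E_setfun)
  also have "\<dots> = E_setfun g n tau ?U (string_factors ?L' * ?V)"
    using E_setfun_string_factors_mult[OF _ _ assms(5,1) L' setfun_nth_subset_prod_empty[OF h]] by simp
  also have "\<dots> = E_setfun g n tau ?U (string_factors ?L' * (string_factors L * R))"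
    using agree_on_mult[OF _ VLR, of "string_factors ?L'"] by (intro E_setfun_agree_on) (simp add: mult.commute)
  also have "string_factors ?L' * (string_factors L * R) = R"
    using string_factors_neg_mult[OF L] by (simp add: mult.assoc[symmetric])
  also have "E_setfun g n tau ?U R = 0"
    by (rule E_setfun_ord_ge_card_on_eq_0[OF R assms(4,6)])
  finally show "E_gn g n tau a = 0" .
qed
end
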